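(* Let $E$ be a graph, $(G,\le)$ an ordered group, $w:E^1\to G_+$ a function, and $R$ a commutative ring with identity; give $L_R(E)$ the $G$-grading induced by $w$. Suppose $\pi:L_R(E)\to A$ is a homomorphism of $G$-graded $R$-algebras such that $\pi(rv)\ne0$ for all $v\in E^0$ and all nonzero $r\in R$. Then $\pi$ is injective.
   Context: A directed graph $E=(E^0,E^1,r,s)$ with range and source maps $r,s:E^1\to E^0$; a vertex $v$ is regular if $0<|s^{-1}(v)|<\infty$. The Leavitt path algebra $L_R(E)$ is the $R$-algebra generated by $\{v:v\in E^0\}\cup\{e,e^*:e\in E^1\}$ subject to: the vertices are pairwise orthogonal idempotents; $s(e)e=e=er(e)$ and $r(e)e^*=e^*=e^*s(e)$; $e^*f=\delta_{e,f}r(e)$ for $e,f\in E^1$; $v=\sum_{e\in s^{-1}(v)}ee^*$ for every regular vertex $v$. An ordered group is a group with a total order $\le$ such that $g\le h$ implies $fg\le fh$ and $gf\le hf$; $G_+=\{c: \varepsilon\le c,\ c\ne\varepsilon\}$. A map $w:E^1\to G$ induces a $G$-grading on $L_R(E)$ by $\deg v=\varepsilon$, $\deg e=w(e)$, $\deg e^*=w(e)^{-1}$. *)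

theory Defs
  imports Main
begin

text \<open>Terms are formal expressions in the generators
  v, e, e* (ghost edges), built with 0, +, *, and scalar multiplication by R.\<close>

datatype ('r,'v,'e) lterm =
    LV 'v | LE 'e | LG 'e | LZero
  | LAdd "('r,'v,'e) lterm" "('r,'v,'e) lterm"
  | LMul "('r,'v,'e) lterm" "('r,'v,'e) lterm"
  | LSmul 'r "('r,'v,'e) lterm"

inductive_set lterms :: "'v set \<Rightarrow> 'e set \<Rightarrow> ('r,'v,'e) lterm set"
  for V :: "'v set" and Ed :: "'e set" where
  gen_v: "v \<in> V \<Longrightarrow> LV v \<in> lterms V Ed"
| gen_e: "e \<in> Ed \<Longrightarrow> LE e \<in> lterms V Ed"
| gen_g: "e \<in> Ed \<Longrightarrow> LG e \<in> lterms V Ed"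
| zero: "LZero \<in> lterms V Ed"
| add: "x \<in> lterms V Ed \<Longrightarrow> y \<in> lterms V Ed \<Longrightarrow> LAdd x y \<in> lterms V Ed"
| mul: "x \<in> lterms V Ed \<Longrightarrow> y \<in> lterms V Ed \<Longrightarrow> LMul x y \<in> lterms V Ed"
| smul: "x \<in> lterms V Ed \<Longrightarrow> LSmul c x \<in> lterms V Ed"

definition regular_vertex :: "'e set \<Rightarrow> ('e \<Rightarrow> 'v) \<Rightarrow> 'v \<Rightarrow> bool" where
  "regular_vertex Ed sr v \<longleftrightarrow> finite {e \<in> Ed. sr e = v} \<and> {e \<in> Ed. sr e = v} \<noteq> {}"

definition lsum_ee :: "'e list \<Rightarrow> ('r,'v,'e) lterm" where
  "lsum_ee es = foldr (\<lambda>e t. LAdd (LMul (LE e) (LG e)) t) es LZero"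

text \<open>The smallest congruence on well-formed terms containing the axioms of an
  (associative, not necessarily unital) R-algebra and the Leavitt path algebra relations.\<close>

inductive lcong :: "'v set \<Rightarrow> 'e set \<Rightarrow> ('e \<Rightarrow> 'v) \<Rightarrow> ('e \<Rightarrow> 'v)
     \<Rightarrow> ('r::comm_ring_1,'v,'e) lterm \<Rightarrow> ('r,'v,'e) lterm \<Rightarrow> bool"
  for V :: "'v set" and Ed :: "'e set" and sr :: "'e \<Rightarrow> 'v" and rg :: "'e \<Rightarrow> 'v" where
  refl: "x \<in> lterms V Ed \<Longrightarrow> lcong V Ed sr rg x x"
| sym: "lcong V Ed sr rg x y \<Longrightarrow> lcong V Ed sr rg y x"
| trans: "lcong V Ed sr rg x y \<Longrightarrow> lcong V Ed sr rg y z \<Longrightarrow> lcong V Ed sr rg x z"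
| add_cong: "lcong V Ed sr rg x x' \<Longrightarrow> lcong V Ed sr rg y y' \<Longrightarrow>
     lcong V Ed sr rg (LAdd x y) (LAdd x' y')"
| mul_cong: "lcong V Ed sr rg x x' \<Longrightarrow> lcong V Ed sr rg y y' \<Longrightarrow>
     lcong V Ed sr rg (LMul x y) (LMul x' y')"
| smul_cong: "lcong V Ed sr rg x x' \<Longrightarrow> lcong V Ed sr rg (LSmul c x) (LSmul c x')"
| add_assoc: "x \<in> lterms V Ed \<Longrightarrow> y \<in> lterms V Ed \<Longrightarrow> z \<in> lterms V Ed \<Longrightarrow>
     lcong V Ed sr rg (LAdd (LAdd x y) z) (LAdd x (LAdd y z))"
| add_comm: "x \<in> lterms V Ed \<Longrightarrow> y \<in> lterms V Ed \<Longrightarrow>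
     lcong V Ed sr rg (LAdd x y) (LAdd y x)"
| add_zero: "x \<in> lterms V Ed \<Longrightarrow> lcong V Ed sr rg (LAdd x LZero) x"
| smul_zero: "x \<in> lterms V Ed \<Longrightarrow> lcong V Ed sr rg (LSmul 0 x) LZero"
| mul_assoc: "x \<in> lterms V Ed \<Longrightarrow> y \<in> lterms V Ed \<Longrightarrow> z \<in> lterms V Ed \<Longrightarrow>
     lcong V Ed sr rg (LMul (LMul x y) z) (LMul x (LMul y z))"
| distrib_left: "x \<in> lterms V Ed \<Longrightarrow> y \<in> lterms V Ed \<Longrightarrow> z \<in> lterms V Ed \<Longrightarrow>
     lcong V Ed sr rg (LMul x (LAdd y z)) (LAdd (LMul x y) (LMul x z))"
| distrib_right: "x \<in> lterms V Ed \<Longrightarrow> y \<in> lterms V Ed \<Longrightarrow> z \<in> lterms V Ed \<Longrightarrow>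
     lcong V Ed sr rg (LMul (LAdd x y) z) (LAdd (LMul x z) (LMul y z))"
| smul_add: "x \<in> lterms V Ed \<Longrightarrow> y \<in> lterms V Ed \<Longrightarrow>
     lcong V Ed sr rg (LSmul c (LAdd x y)) (LAdd (LSmul c x) (LSmul c y))"
| add_smul: "x \<in> lterms V Ed \<Longrightarrow>
     lcong V Ed sr rg (LSmul (c + d) x) (LAdd (LSmul c x) (LSmul d x))"
| smul_smul: "x \<in> lterms V Ed \<Longrightarrow>
     lcong V Ed sr rg (LSmul (c * d) x) (LSmul c (LSmul d x))"
| one_smul: "x \<in> lterms V Ed \<Longrightarrow> lcong V Ed sr rg (LSmul 1 x) x"
| smul_mul_left: "x \<in> lterms V Ed \<Longrightarrow> y \<in> lterms V Ed \<Longrightarrow>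
     lcong V Ed sr rg (LSmul c (LMul x y)) (LMul (LSmul c x) y)"
| smul_mul_right: "x \<in> lterms V Ed \<Longrightarrow> y \<in> lterms V Ed \<Longrightarrow>
     lcong V Ed sr rg (LSmul c (LMul x y)) (LMul x (LSmul c y))"
| vv: "v \<in> V \<Longrightarrow> u \<in> V \<Longrightarrow>
     lcong V Ed sr rg (LMul (LV v) (LV u)) (if v = u then LV v else LZero)"
| se: "e \<in> Ed \<Longrightarrow> lcong V Ed sr rg (LMul (LV (sr e)) (LE e)) (LE e)"
| er: "e \<in> Ed \<Longrightarrow> lcong V Ed sr rg (LMul (LE e) (LV (rg e))) (LE e)"
| rg_ghost: "e \<in> Ed \<Longrightarrow> lcong V Ed sr rg (LMul (LV (rg e)) (LG e)) (LG e)"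
| ghost_s: "e \<in> Ed \<Longrightarrow> lcong V Ed sr rg (LMul (LG e) (LV (sr e))) (LG e)"
| ck1: "e \<in> Ed \<Longrightarrow> f \<in> Ed \<Longrightarrow>
     lcong V Ed sr rg (LMul (LG e) (LE f)) (if e = f then LV (rg e) else LZero)"
| ck2: "v \<in> V \<Longrightarrow> regular_vertex Ed sr v \<Longrightarrow> distinct es \<Longrightarrow>
     set es = {e \<in> Ed. sr e = v} \<Longrightarrow> lcong V Ed sr rg (LV v) (lsum_ee es)"

definition lcls :: "'v set \<Rightarrow> 'e set \<Rightarrow> ('e \<Rightarrow> 'v) \<Rightarrow> ('e \<Rightarrow> 'v)
     \<Rightarrow> ('r::comm_ring_1,'v,'e) lterm \<Rightarrow> ('r,'v,'e) lterm set" where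
  "lcls V Ed sr rg t = {u. lcong V Ed sr rg t u}"

definition LPA :: "'v set \<Rightarrow> 'e set \<Rightarrow> ('e \<Rightarrow> 'v) \<Rightarrow> ('e \<Rightarrow> 'v)
     \<Rightarrow> ('r::comm_ring_1,'v,'e) lterm set set" where
  "LPA V Ed sr rg = lcls V Ed sr rg ` lterms V Ed"

inductive monom_deg :: "('e \<Rightarrow> 'g::group_add) \<Rightarrow> ('r,'v,'e) lterm \<Rightarrow> 'g \<Rightarrow> bool"
  for w :: "'e \<Rightarrow> 'g" where
  "monom_deg w (LV v) 0"
| "monom_deg w (LE e) (w e)"
| "monom_deg w (LG e) (- w e)"
| "monom_deg w x g \<Longrightarrow> monom_deg w y h \<Longrightarrow> monom_deg w (LMul x y) (g + h)"

inductive lin_deg :: "('e \<Rightarrow> 'g::group_add) \<Rightarrow> 'g \<Rightarrow> ('r,'v,'e) lterm \<Rightarrow> bool"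
  for w :: "'e \<Rightarrow> 'g" and g :: 'g where
  "monom_deg w t g \<Longrightarrow> lin_deg w g t"
| "lin_deg w g LZero"
| "lin_deg w g x \<Longrightarrow> lin_deg w g y \<Longrightarrow> lin_deg w g (LAdd x y)"
| "lin_deg w g x \<Longrightarrow> lin_deg w g (LSmul c x)"

definition LPA_comp :: "'v set \<Rightarrow> 'e set \<Rightarrow> ('e \<Rightarrow> 'v) \<Rightarrow> ('e \<Rightarrow> 'v) \<Rightarrow> ('e \<Rightarrow> 'g::group_add)
     \<Rightarrow> 'g \<Rightarrow> ('r::comm_ring_1,'v,'e) lterm set set" where
  "LPA_comp V Ed sr rg w g = lcls V Ed sr rg ` {t \<in> lterms V Ed. lin_deg w g t}"

definition r_algebra :: "('r::comm_ring_1 \<Rightarrow> 'a::ring \<Rightarrow> 'a) \<Rightarrow> bool" where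
  "r_algebra sm \<longleftrightarrow>
     (\<forall>c x y. sm c (x + y) = sm c x + sm c y) \<and>
     (\<forall>c d x. sm (c + d) x = sm c x + sm d x) \<and>
     (\<forall>c d x. sm (c * d) x = sm c (sm d x)) \<and>
     (\<forall>x. sm 1 x = x) \<and>
     (\<forall>c x y. sm c (x * y) = sm c x * y \<and> sm c (x * y) = x * sm c y)"

definition graded_algebra :: "('r::comm_ring_1 \<Rightarrow> 'a::ring \<Rightarrow> 'a) \<Rightarrow> ('g::group_add \<Rightarrow> 'a set) \<Rightarrow> bool" where
  "graded_algebra sm Ag \<longleftrightarrow> r_algebra sm \<and>
     (\<forall>g. 0 \<in> Ag g \<and> (\<forall>x\<in>Ag g. \<forall>y\<in>Ag g. x + y \<in> Ag g) \<and> (\<forall>c. \<forall>x\<in>Ag g. sm c x \<in> Ag g)) \<and>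
     (\<forall>g h. \<forall>x\<in>Ag g. \<forall>y\<in>Ag h. x * y \<in> Ag (g + h)) \<and>
     (\<forall>x. \<exists>!a. finite {g. a g \<noteq> 0} \<and> (\<forall>g. a g \<in> Ag g) \<and> x = (\<Sum>g\<in>{g. a g \<noteq> 0}. a g))"

definition ordered_group :: "('g::{group_add, linorder}) itself \<Rightarrow> bool" where
  "ordered_group _ \<longleftrightarrow> (\<forall>a b c :: 'g. a \<le> b \<longrightarrow> c + a \<le> c + b \<and> a + c \<le> b + c)"

end

theory Submission
  imports Defs "HOL-Library.Multiset"
begin

text \<open>Every element of the Leavitt path algebra is an R-linear combination of monomials
  c p q* with p, q paths ending at a common vertex, and the monomial c p q* has degree
  w(p) - w(q).  Since \<pi> is graded and the grading of A is a direct sum, it suffices to show that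
  a homogeneous combination X of monomials with \<pi> X = 0 vanishes in L_R(E).  This is done by
  induction on the maximal length of the monomials; multiplying by vertices, one may assume that
  all monomials start at the same vertex u.  If all monomials start with a real edge
  (resp. end with a ghost edge), multiplying by e* on the left (resp. by e on the right) for each
  edge e shortens them, and the pieces are recovered by multiplying back.  Otherwise, since
  all weights are positive, X has degree 0 and its monomials are either vertices c u or have
  both paths nonempty.  At a regular vertex u the Cuntz-Krieger relation u = \<Sum> e e* reduces X to
  the shorter e* X.  At an infinite emitter some edge e from u is not the first edge of any
  monomial; then e* X e is a multiple c (r e) of a vertex, so c = 0 by the hypothesis on \<pi>, which
  kills the vertex part of X and leaves monomials that all start with a real edge.\<close>

lemma sum_list_filter_partition:
  fixes h :: "'b \<Rightarrow> 'a::comm_monoid_add"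
  shows "finite D \<Longrightarrow> d ` set M \<subseteq> D \<Longrightarrow>
    sum_list (map h M) = (\<Sum>g\<in>D. sum_list (map h (filter (\<lambda>m. d m = g) M)))"
proof (induction M)
  case Nil thus ?case by simp
next
  case (Cons m M)
  have "(\<Sum>g\<in>D. sum_list (map h (filter (\<lambda>m. d m = g) (m#M)))) =
        (\<Sum>g\<in>D. (if d m = g then h m else 0) + sum_list (map h (filter (\<lambda>m. d m = g) M)))"
    by (intro sum.cong) auto
  also have "\<dots> = (\<Sum>g\<in>D. (if d m = g then h m else 0))
      + (\<Sum>g\<in>D. sum_list (map h (filter (\<lambda>m. d m = g) M)))"
    by (rule sum.distrib)
  also have "\<dots> = h m + sum_list (map h M)" using Cons by (simp add: sum.delta)
  finally show ?case by simp
qed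

lemma ordered_group_add_left_mono:
  fixes a b c :: "'g::{group_add, linorder}"
  assumes "ordered_group TYPE('g)" and "a \<le> b"
  shows "c + a \<le> c + b"
  using assms unfolding ordered_group_def by blast

lemma ordered_group_neg_nonpos:
  fixes x :: "'g::{group_add, linorder}"
  assumes "ordered_group TYPE('g)" and "0 \<le> x"
  shows "- x \<le> 0"
  using ordered_group_add_left_mono[OF assms, of "- x"] by simp

lemma r_algebra_minus_one_smul:
  assumes "r_algebra sm"
  shows "sm (-1) x = - x"
proof -
  have add: "\<And>c d x. sm (c + d) x = sm c x + sm d x" and one: "\<And>x. sm 1 x = x"
    using assms unfolding r_algebra_def by blast+
  have "sm 0 x = 0" using add[of 0 0 x] by simp
  moreover have "sm (-1 + 1) x = sm (-1) x + x" using add[of "-1" 1 x] one[of x] by simp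
  ultimately show ?thesis by (simp add: eq_neg_iff_add_eq_0)
qed

lemma graded_algebra_components_eq_zero:
  assumes "graded_algebra sm Ag" and "finite {g. a g \<noteq> 0}" and "\<forall>g. a g \<in> Ag g"
    and "(\<Sum>g\<in>{g. a g \<noteq> 0}. a g) = 0"
  shows "a = (\<lambda>_. 0)"
proof -
  let ?decomp = "\<lambda>a. finite {g. a g \<noteq> 0} \<and> (\<forall>g. a g \<in> Ag g) \<and> 0 = (\<Sum>g\<in>{g. a g \<noteq> 0}. a g)"
  have "\<exists>!a. ?decomp a"
    using assms(1) unfolding graded_algebra_def by (elim conjE allE)
  moreover have "?decomp (\<lambda>_. 0)"
    using assms(1) unfolding graded_algebra_def by simp
  moreover have "?decomp a" using assms(2-4) by simp
  ultimately show ?thesis using ex1_iff_ex_Uniq[of ?decomp] Uniq_D[of ?decomp a "\<lambda>_. 0"] by blast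
qed

declare lcong.trans [trans]

primrec lsum :: "('r,'v,'e) lterm list \<Rightarrow> ('r,'v,'e) lterm" where
  "lsum [] = LZero" | "lsum (x#xs) = LAdd x (lsum xs)"

type_synonym ('r,'v,'e) monom = "'r \<times> 'v \<times> 'e list \<times> 'e list"

text \<open>The monomial (c, u, a, b) stands for c a b*, where a and b are paths ending at the
  vertex u, each given by its list of edges from the source on, and b* = (b1 ... bl)* =
  bl* ... b1*; an empty path is the vertex u itself.\<close>

fun path_term :: "'e list \<Rightarrow> 'v \<Rightarrow> ('r,'v,'e) lterm" where
  "path_term [] u = LV u" | "path_term (e#es) u = LMul (LE e) (path_term es u)"
fun ghost_term :: "'e list \<Rightarrow> 'v \<Rightarrow> ('r,'v,'e) lterm" where
  "ghost_term [] u = LV u" | "ghost_term (e#es) u = LMul (ghost_term es u) (LG e)"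
fun path_source :: "('e \<Rightarrow> 'v) \<Rightarrow> 'e list \<Rightarrow> 'v \<Rightarrow> 'v" where
  "path_source s [] u = u" | "path_source s (e#es) u = s e"
fun monom_term :: "('r,'v,'e) monom \<Rightarrow> ('r,'v,'e) lterm" where
  "monom_term (c,u,a,b) = LSmul c (LMul (path_term a u) (ghost_term b u))"
definition monoms_term :: "('r,'v,'e) monom list \<Rightarrow> ('r,'v,'e) lterm" where
  "monoms_term M = lsum (map monom_term M)"

fun mcoef :: "('r,'v,'e) monom \<Rightarrow> 'r" where "mcoef (c,u,a,b) = c"
fun mvertex :: "('r,'v,'e) monom \<Rightarrow> 'v" where "mvertex (c,u,a,b) = u"
fun mpath :: "('r,'v,'e) monom \<Rightarrow> 'e list" where "mpath (c,u,a,b) = a"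
fun mghost :: "('r,'v,'e) monom \<Rightarrow> 'e list" where "mghost (c,u,a,b) = b"
definition mlen :: "('r,'v,'e) monom \<Rightarrow> nat" where "mlen m = length (mpath m) + length (mghost m)"

lemma mlen_simp [simp]: "mlen (c,u,a,b) = length a + length b"
  by (simp add: mlen_def)

fun scale_monom :: "'r::times \<Rightarrow> ('r,'v,'e) monom \<Rightarrow> ('r,'v,'e) monom" where
  "scale_monom d (c,u,a,b) = (d*c,u,a,b)"

fun drop_path_head :: "('r,'v,'e) monom \<Rightarrow> ('r,'v,'e) monom" where
  "drop_path_head (c,u,a,b) = (c,u,tl a,b)"
fun drop_ghost_head :: "('r,'v,'e) monom \<Rightarrow> ('r,'v,'e) monom" where
  "drop_ghost_head (c,u,a,b) = (c,u,a,tl b)"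
fun cons_ghost :: "'e \<Rightarrow> ('r,'v,'e) monom \<Rightarrow> ('r,'v,'e) monom" where
  "cons_ghost f (c,u,a,b) = (c,u,a,f#b)"
text \<open>The first equation is a placeholder: monom_mult_edge f m represents m f only when the ghost
  part of m is nonempty.\<close>

fun monom_mult_edge :: "'e \<Rightarrow> ('r,'v,'e) monom \<Rightarrow> ('r,'v,'e) monom list" where
  "monom_mult_edge f (c,u,a,[]) = []"
| "monom_mult_edge f (c,u,a,f'#b) = (if f' = f then [(c,u,a,b)] else [])"

locale lpa_graph =
  fixes V :: "'v set" and Ed :: "'e set" and sr rg :: "'e \<Rightarrow> 'v"
    and rty :: "'r::comm_ring_1 itself"
  assumes graph: "\<forall>e\<in>Ed. sr e \<in> V \<and> rg e \<in> V"
begin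

abbreviation lpa_eq :: "('r,'v,'e) lterm \<Rightarrow> ('r,'v,'e) lterm \<Rightarrow> bool" (infix "\<approx>" 50)
  where "x \<approx> y \<equiv> lcong V Ed sr rg x y"

abbreviation wf_term :: "('r,'v,'e) lterm \<Rightarrow> bool" where "wf_term x \<equiv> x \<in> lterms V Ed"

lemma add_cong_left: "x \<approx> x' \<Longrightarrow> wf_term y \<Longrightarrow> LAdd x y \<approx> LAdd x' y"
  by (simp add: lcong.add_cong lcong.refl)
lemma add_cong_right: "wf_term x \<Longrightarrow> y \<approx> y' \<Longrightarrow> LAdd x y \<approx> LAdd x y'"
  by (simp add: lcong.add_cong lcong.refl)
lemma mul_cong_left: "x \<approx> x' \<Longrightarrow> wf_term y \<Longrightarrow> LMul x y \<approx> LMul x' y"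
  by (simp add: lcong.mul_cong lcong.refl)
lemma mul_cong_right: "wf_term x \<Longrightarrow> y \<approx> y' \<Longrightarrow> LMul x y \<approx> LMul x y'"
  by (simp add: lcong.mul_cong lcong.refl)

lemma smul_LZero: "LSmul c (LZero::('r,'v,'e) lterm) \<approx> LZero"
proof -
  have "LSmul c (LZero::('r,'v,'e) lterm) \<approx> LSmul c (LSmul 0 LZero)"
    by (intro lcong.smul_cong lcong.sym[OF lcong.smul_zero] lterms.zero)
  also have "\<dots> \<approx> LSmul (c * 0) LZero"
    by (intro lcong.sym[OF lcong.smul_smul] lterms.zero)
  also have "\<dots> \<approx> LZero" by (simp add: lcong.smul_zero lterms.zero)
  finally show ?thesis .
qed

lemma LZero_mul: "wf_term x \<Longrightarrow> LMul LZero x \<approx> LZero"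
proof -
  assume x: "wf_term x"
  have "LMul LZero x \<approx> LMul (LSmul 0 LZero) x"
    by (intro mul_cong_left lcong.sym[OF lcong.smul_zero] lterms.zero x)
  also have "\<dots> \<approx> LSmul 0 (LMul LZero x)"
    by (intro lcong.sym[OF lcong.smul_mul_left] lterms.zero x)
  also have "\<dots> \<approx> LZero" by (intro lcong.smul_zero lterms.intros x)
  finally show ?thesis .
qed

lemma mul_LZero: "wf_term x \<Longrightarrow> LMul x LZero \<approx> LZero"
proof -
  assume x: "wf_term x"
  have "LMul x LZero \<approx> LMul x (LSmul 0 LZero)"
    by (intro mul_cong_right lcong.sym[OF lcong.smul_zero] lterms.zero x)
  also have "\<dots> \<approx> LSmul 0 (LMul x LZero)"
    by (intro lcong.sym[OF lcong.smul_mul_right] lterms.zero x)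
  also have "\<dots> \<approx> LZero" by (intro lcong.smul_zero lterms.intros x)
  finally show ?thesis .
qed

lemma LZero_add: "wf_term x \<Longrightarrow> LAdd LZero x \<approx> x"
  by (meson lcong.trans lcong.add_comm lcong.add_zero lterms.zero)

lemma LZero_add_LZero: "LAdd LZero LZero \<approx> LZero"
  by (intro lcong.add_zero lterms.zero)

lemma minus_one_smul_add: "wf_term x \<Longrightarrow> LAdd (LSmul (-1) x) x \<approx> LZero"
proof -
  assume x: "wf_term x"
  have "LAdd (LSmul (-1) x) x \<approx> LAdd (LSmul (-1) x) (LSmul 1 x)"
    by (intro add_cong_right lcong.sym[OF lcong.one_smul] lterms.smul x)
  also have "\<dots> \<approx> LSmul (-1 + 1) x" by (intro lcong.sym[OF lcong.add_smul] x)
  also have "\<dots> \<approx> LZero" by (simp add: lcong.smul_zero x)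
  finally show ?thesis .
qed

lemma lcong_if_diff_LZero:
  assumes d: "LAdd s (LSmul (-1) t) \<approx> LZero" and s: "wf_term s" and t: "wf_term t"
  shows "s \<approx> t"
proof -
  have "s \<approx> LAdd s LZero" using s by (intro lcong.sym[OF lcong.add_zero])
  also have "\<dots> \<approx> LAdd s (LAdd (LSmul (-1) t) t)"
    using s t by (intro add_cong_right lcong.sym[OF minus_one_smul_add])
  also have "\<dots> \<approx> LAdd (LAdd s (LSmul (-1) t)) t"
    using s t by (intro lcong.sym[OF lcong.add_assoc] lterms.intros)
  also have "\<dots> \<approx> LAdd LZero t" using d t by (intro add_cong_left)
  also have "\<dots> \<approx> t" using t by (intro LZero_add)
  finally show ?thesis .
qed

lemma mult_smul_left: "wf_term x \<Longrightarrow> wf_term y \<Longrightarrow> LMul (LSmul c x) y \<approx> LSmul c (LMul x y)"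
  by (rule lcong.sym, rule lcong.smul_mul_left)
lemma mult_smul_right: "wf_term x \<Longrightarrow> wf_term y \<Longrightarrow> LMul x (LSmul c y) \<approx> LSmul c (LMul x y)"
  by (rule lcong.sym, rule lcong.smul_mul_right)

lemma lterms_lsum: "\<forall>x\<in>set xs. wf_term x \<Longrightarrow> wf_term (lsum xs)"
  by (induction xs) (simp_all add: lterms.zero lterms.add)

lemma lsum_append: "\<forall>x\<in>set xs. wf_term x \<Longrightarrow> \<forall>x\<in>set ys. wf_term x \<Longrightarrow>
   lsum (xs @ ys) \<approx> LAdd (lsum xs) (lsum ys)"
proof (induction xs)
  case Nil
  hence "wf_term (lsum ys)" by (intro lterms_lsum) simp
  hence "lsum ys \<approx> LAdd LZero (lsum ys)" by (rule lcong.sym[OF LZero_add])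
  thus ?case by simp
next
  case (Cons x xs)
  hence h: "lsum (xs @ ys) \<approx> LAdd (lsum xs) (lsum ys)" by simp
  have "lsum ((x#xs) @ ys) \<approx> LAdd x (LAdd (lsum xs) (lsum ys))"
    using Cons h by (simp, intro add_cong_right, simp_all)
  also have "\<dots> \<approx> LAdd (LAdd x (lsum xs)) (lsum ys)"
    using Cons by (intro lcong.sym[OF lcong.add_assoc] lterms_lsum) auto
  finally show ?case by simp
qed

lemma lsum_remove1: "x \<in> set xs \<Longrightarrow> \<forall>x\<in>set xs. wf_term x \<Longrightarrow>
   lsum xs \<approx> LAdd x (lsum (remove1 x xs))"
proof (induction xs)
  case Nil thus ?case by simp
next
  case (Cons y ys)
  show ?case
  proof (cases "x = y")
    case True
    have "\<forall>z\<in>set (y#ys). wf_term z" using Cons by simp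
    hence "wf_term (lsum (y#ys))" by (rule lterms_lsum)
    thus ?thesis using True by (simp add: lcong.refl)
  next
    case False
    hence xs: "x \<in> set ys" using Cons by simp
    have w: "wf_term x" "wf_term y" using Cons xs by auto
    have "\<forall>z\<in>set (remove1 x ys). wf_term z" using Cons(3) set_remove1_subset[of x ys] by auto
    hence w3: "wf_term (lsum (remove1 x ys))" by (rule lterms_lsum)
    note w = w w3
    have "lsum (y#ys) \<approx> LAdd y (LAdd x (lsum (remove1 x ys)))"
      using Cons.IH[OF xs] Cons.prems w by (simp, intro add_cong_right, simp_all)
    also have "\<dots> \<approx> LAdd (LAdd y x) (lsum (remove1 x ys))" using w
      by (intro lcong.sym[OF lcong.add_assoc])
    also have "\<dots> \<approx> LAdd (LAdd x y) (lsum (remove1 x ys))" using w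
      by (intro add_cong_left lcong.add_comm)
    also have "\<dots> \<approx> LAdd x (LAdd y (lsum (remove1 x ys)))" using w by (intro lcong.add_assoc)
    finally show ?thesis using False by simp
  qed
qed

lemma lsum_perm: "mset xs = mset ys \<Longrightarrow> \<forall>x\<in>set xs. wf_term x \<Longrightarrow> lsum xs \<approx> lsum ys"
proof (induction xs arbitrary: ys)
  case Nil
  hence "ys = []" by simp
  thus ?case by (simp add: lcong.refl lterms.intros)
next
  case (Cons x xs)
  have "x \<in># mset ys" unfolding Cons(2)[symmetric] by simp
  hence xin: "x \<in> set ys" by simp
  have m: "mset xs = mset (remove1 x ys)" unfolding mset_remove1 Cons(2)[symmetric] by simp
  have "set ys = set (x#xs)" using Cons(2) by (metis set_mset_mset)
  hence wy: "\<forall>y\<in>set ys. wf_term y" using Cons(3) by simp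
  have "lsum (x#xs) \<approx> LAdd x (lsum (remove1 x ys))" using Cons m
    by (simp, intro add_cong_right, simp_all)
  also have "\<dots> \<approx> lsum ys" using xin wy by (intro lcong.sym[OF lsum_remove1])
  finally show ?case .
qed

lemma lsum_cong: "list_all2 (\<approx>) xs ys \<Longrightarrow> lsum xs \<approx> lsum ys"
  by (induction rule: list_all2_induct) (auto intro: lcong.add_cong lcong.refl lterms.intros)

lemma lsum_map_cong: "\<forall>x\<in>set xs. f x \<approx> g x \<Longrightarrow> lsum (map f xs) \<approx> lsum (map g xs)"
  by (rule lsum_cong) (simp add: list_all2_conv_all_nth)

lemma mult_lsum: "wf_term x \<Longrightarrow> \<forall>y\<in>set ys. wf_term y \<Longrightarrow> LMul x (lsum ys) \<approx> lsum (map (LMul x) ys)"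
proof (induction ys)
  case Nil thus ?case by (simp add: mul_LZero)
next
  case (Cons y ys)
  have "LMul x (lsum (y#ys)) \<approx> LAdd (LMul x y) (LMul x (lsum ys))"
    using Cons by (simp add: lcong.distrib_left lterms_lsum)
  also have "\<dots> \<approx> LAdd (LMul x y) (lsum (map (LMul x) ys))"
    using Cons by (intro add_cong_right) (auto intro: lterms.intros)
  finally show ?case by simp
qed

lemma lsum_mult: "wf_term x \<Longrightarrow> \<forall>y\<in>set ys. wf_term y \<Longrightarrow>
   LMul (lsum ys) x \<approx> lsum (map (\<lambda>y. LMul y x) ys)"
proof (induction ys)
  case Nil thus ?case by (simp add: LZero_mul)
next
  case (Cons y ys)
  have "LMul (lsum (y#ys)) x \<approx> LAdd (LMul y x) (LMul (lsum ys) x)"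
    using Cons by (simp add: lcong.distrib_right lterms_lsum)
  also have "\<dots> \<approx> LAdd (LMul y x) (lsum (map (\<lambda>y. LMul y x) ys))"
    using Cons by (intro add_cong_right) (auto intro: lterms.intros)
  finally show ?case by simp
qed

lemma smul_lsum: "\<forall>y\<in>set ys. wf_term y \<Longrightarrow> LSmul c (lsum ys) \<approx> lsum (map (LSmul c) ys)"
proof (induction ys)
  case Nil thus ?case by (simp add: smul_LZero)
next
  case (Cons y ys)
  have "LSmul c (lsum (y#ys)) \<approx> LAdd (LSmul c y) (LSmul c (lsum ys))"
    using Cons by (simp add: lcong.smul_add lterms_lsum)
  also have "\<dots> \<approx> LAdd (LSmul c y) (lsum (map (LSmul c) ys))"
    using Cons by (intro add_cong_right) (auto intro: lterms.intros)
  finally show ?case by simp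
qed

lemma lsum_concat: "\<forall>xs\<in>set xss. \<forall>x\<in>set xs. wf_term x \<Longrightarrow> lsum (concat xss) \<approx> lsum (map lsum xss)"
proof (induction xss)
  case Nil thus ?case by (simp add: lcong.refl lterms.intros)
next
  case (Cons xs xss)
  have "lsum (concat (xs#xss)) \<approx> LAdd (lsum xs) (lsum (concat xss))"
    using Cons by (simp add: lsum_append)
  also have "\<dots> \<approx> LAdd (lsum xs) (lsum (map lsum xss))"
    using Cons by (intro add_cong_right) (auto intro: lterms_lsum)
  finally show ?case by simp
qed

fun is_path :: "'e list \<Rightarrow> 'v \<Rightarrow> bool" where
  "is_path [] u = True" | "is_path (e#es) u = (e \<in> Ed \<and> rg e = path_source sr es u \<and> is_path es u)"
fun valid_monom :: "('r,'v,'e) monom \<Rightarrow> bool" where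
  "valid_monom (c,u,a,b) = (u \<in> V \<and> is_path a u \<and> is_path b u)"

lemma is_path_edges: "is_path a u \<Longrightarrow> set a \<subseteq> Ed"
  by (induction a) auto

lemma path_source_vertex: "u \<in> V \<Longrightarrow> is_path a u \<Longrightarrow> path_source sr a u \<in> V"
  by (cases a) (use graph in auto)

lemma lterms_path_term: "u \<in> V \<Longrightarrow> set a \<subseteq> Ed \<Longrightarrow> wf_term (path_term a u)"
  by (induction a) (auto intro: lterms.intros)
lemma lterms_ghost_term: "u \<in> V \<Longrightarrow> set a \<subseteq> Ed \<Longrightarrow> wf_term (ghost_term a u)"
  by (induction a) (auto intro: lterms.intros)
lemma lterms_monom_term: "valid_monom m \<Longrightarrow> wf_term (monom_term m)"
  by (cases m) (auto intro!: lterms.intros lterms_path_term lterms_ghost_term dest: is_path_edges)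
lemma lterms_monoms_term: "\<forall>m\<in>set M. valid_monom m \<Longrightarrow> wf_term (monoms_term M)"
  unfolding monoms_term_def by (rule lterms_lsum) (auto intro: lterms_monom_term)

lemma vertex_mult_vertex: "v \<in> V \<Longrightarrow> u \<in> V \<Longrightarrow> LMul (LV v) (LV u) \<approx> (if v = u then LV v else LZero)"
  by (rule lcong.vv)
lemma ghost_mult_edge: "e \<in> Ed \<Longrightarrow> f \<in> Ed \<Longrightarrow> LMul (LG e) (LE f) \<approx> (if e = f then LV (rg e) else LZero)"
  by (rule lcong.ck1)
lemma ghost_mult_source: "e \<in> Ed \<Longrightarrow> LMul (LG e) (LV (sr e)) \<approx> LG e" by (rule lcong.ghost_s)
lemma range_mult_ghost: "e \<in> Ed \<Longrightarrow> LMul (LV (rg e)) (LG e) \<approx> LG e" by (rule lcong.rg_ghost)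
lemma source_mult_edge: "e \<in> Ed \<Longrightarrow> LMul (LV (sr e)) (LE e) \<approx> LE e" by (rule lcong.se)
lemma edge_mult_range: "e \<in> Ed \<Longrightarrow> LMul (LE e) (LV (rg e)) \<approx> LE e" by (rule lcong.er)
lemma vertex_idem: "v \<in> V \<Longrightarrow> LMul (LV v) (LV v) \<approx> LV v"
  using vertex_mult_vertex[of v v] by simp

lemma vertex_mult_path_term: "u \<in> V \<Longrightarrow> is_path a u \<Longrightarrow> v \<in> V \<Longrightarrow>
   LMul (LV v) (path_term a u) \<approx> (if v = path_source sr a u then path_term a u else LZero)"
proof (cases a)
  case Nil
  assume "u \<in> V" "v \<in> V"
  thus ?thesis using Nil vertex_mult_vertex[of v u] by (cases "v = u") auto
next
  case (Cons e es)
  assume u: "u \<in> V" and p: "is_path a u" and v: "v \<in> V"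
  have e: "e \<in> Ed" "set es \<subseteq> Ed" using p Cons is_path_edges by auto
  have wr: "wf_term (path_term es u)" using u e lterms_path_term by auto
  have se: "sr e \<in> V" using e graph by auto
  have "LMul (LV v) (path_term a u) \<approx> LMul (LMul (LV v) (LE e)) (path_term es u)"
    using Cons v e wr by (simp, intro lcong.sym[OF lcong.mul_assoc] lterms.intros) auto
  also have "\<dots> \<approx> (if v = sr e then path_term a u else LZero)"
  proof (cases "v = sr e")
    case True thus ?thesis using Cons wr e by (simp, intro mul_cong_left source_mult_edge) auto
  next
    case False
    have "LMul (LV v) (LE e) \<approx> LMul (LV v) (LMul (LV (sr e)) (LE e))"
      by (intro mul_cong_right lcong.sym[OF source_mult_edge])
        (use e v in \<open>auto intro: lterms.intros\<close>)
    also have "\<dots> \<approx> LMul (LMul (LV v) (LV (sr e))) (LE e)"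
      by (intro lcong.sym[OF lcong.mul_assoc]) (use e v se in \<open>auto intro: lterms.intros\<close>)
    also have "\<dots> \<approx> LMul LZero (LE e)"
      using vertex_mult_vertex[OF v se] False
        by (intro mul_cong_left) (use e in \<open>auto intro: lterms.intros\<close>)
    also have "\<dots> \<approx> LZero" by (intro LZero_mul) (use e in \<open>auto intro: lterms.intros\<close>)
    finally have "LMul (LMul (LV v) (LE e)) (path_term es u) \<approx> LMul LZero (path_term es u)"
      using wr by (intro mul_cong_left)
    also have "\<dots> \<approx> LZero" using wr by (rule LZero_mul)
    finally show ?thesis using False by simp
  qed
  finally show ?thesis using Cons by simp
qed


lemma vertex_mult_ghost_term: "u \<in> V \<Longrightarrow> is_path b u \<Longrightarrow> LMul (LV u) (ghost_term b u) \<approx> ghost_term b u"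
proof (induction b)
  case Nil thus ?case by (simp add: vertex_idem)
next
  case (Cons b bs)
  have w: "wf_term (ghost_term bs u)" "b \<in> Ed" using Cons
    by (auto intro!: lterms_ghost_term dest: is_path_edges)
  have "LMul (LV u) (ghost_term (b#bs) u) \<approx> LMul (LMul (LV u) (ghost_term bs u)) (LG b)"
    using Cons w by (simp, intro lcong.sym[OF lcong.mul_assoc] lterms.intros) auto
  also have "\<dots> \<approx> ghost_term (b#bs) u" using Cons w
    by (simp, intro mul_cong_left) (auto intro: lterms.intros)
  finally show ?case .
qed

lemma ghost_term_mult_source: "u \<in> V \<Longrightarrow> is_path b u \<Longrightarrow>
   LMul (ghost_term b u) (LV (path_source sr b u)) \<approx> ghost_term b u"
proof (cases b)
  case Nil thus "u \<in> V \<Longrightarrow> ?thesis" by (simp add: vertex_idem)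
next
  case (Cons b' bs)
  assume u: "u \<in> V" and p: "is_path b u"
  have w: "wf_term (ghost_term bs u)" "b' \<in> Ed" "sr b' \<in> V" using Cons u p graph
    by (auto intro!: lterms_ghost_term dest: is_path_edges)
  have "LMul (ghost_term b u) (LV (path_source sr b u))
    \<approx> LMul (ghost_term bs u) (LMul (LG b') (LV (sr b')))"
    using Cons w by (simp, intro lcong.mul_assoc lterms.intros) auto
  also have "\<dots> \<approx> ghost_term b u" using Cons w by (simp, intro mul_cong_right ghost_mult_source) auto
  finally show ?thesis .
qed

lemma ghost_mult_vertex: "e \<in> Ed \<Longrightarrow> u \<in> V \<Longrightarrow> LMul (LG e) (LV u) \<approx> (if sr e = u then LG e else LZero)"
proof (cases "sr e = u")
  case True thus "e \<in> Ed \<Longrightarrow> u \<in> V \<Longrightarrow> ?thesis" using ghost_mult_source[of e] by simp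
next
  case False
  assume e: "e \<in> Ed" and u: "u \<in> V"
  have se: "sr e \<in> V" using e graph by auto
  have "LMul (LG e) (LV u) \<approx> LMul (LMul (LG e) (LV (sr e))) (LV u)"
    using e u by (intro mul_cong_left lcong.sym[OF ghost_mult_source] lterms.intros)
  also have "\<dots> \<approx> LMul (LG e) (LMul (LV (sr e)) (LV u))" using e u se
    by (intro lcong.mul_assoc lterms.intros)
  also have "\<dots> \<approx> LMul (LG e) LZero" using e vertex_mult_vertex[OF se u] False
    by (intro mul_cong_right lterms.intros) auto
  also have "\<dots> \<approx> LZero" using e by (intro mul_LZero lterms.intros)
  finally show ?thesis using False by simp
qed

lemma path_source_append: "bs \<noteq> [] \<Longrightarrow> path_source s (bs @ cs) u = path_source s bs v"
  by (cases bs) auto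

lemma is_path_snoc: "is_path b u \<Longrightarrow> e \<in> Ed \<Longrightarrow> sr e = u \<Longrightarrow> is_path (b @ [e]) (rg e)"
proof (induction b)
  case Nil thus ?case by simp
next
  case (Cons b bs)
  thus ?case using path_source_append[of bs sr "[e]" "rg e" u] by (cases "bs = []") auto
qed

lemma ghost_mult_ghost_term: "e \<in> Ed \<Longrightarrow> u \<in> V \<Longrightarrow> is_path b u \<Longrightarrow> sr e = u \<Longrightarrow>
   LMul (LG e) (ghost_term b u) \<approx> ghost_term (b @ [e]) (rg e)"
proof (induction b)
  case Nil
  have "LMul (LG e) (LV u) \<approx> LG e" using Nil ghost_mult_source[of e] by simp
  also have "LG e \<approx> LMul (LV (rg e)) (LG e)" using Nil by (intro lcong.sym[OF range_mult_ghost])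
  finally show ?case by simp
next
  case (Cons b bs)
  have w: "wf_term (ghost_term bs u)" "b \<in> Ed" using Cons
    by (auto intro!: lterms_ghost_term dest: is_path_edges)
  have "LMul (LG e) (ghost_term (b#bs) u) \<approx> LMul (LMul (LG e) (ghost_term bs u)) (LG b)"
    using Cons w by (simp, intro lcong.sym[OF lcong.mul_assoc] lterms.intros) auto
  also have "\<dots> \<approx> LMul (ghost_term (bs @ [e]) (rg e)) (LG b)" using Cons w
    by (intro mul_cong_left lterms.intros) auto
  finally show ?case by simp
qed

lemma ghost_mult_vertex_ghost_term:
  assumes e: "e \<in> Ed" and u: "u \<in> V" and b: "is_path b u" and eu: "sr e = u"
  shows "LMul (LMul (LG e) (LV u)) (ghost_term b u)
    \<approx> LMul (LV (rg e)) (ghost_term (b @ [e]) (rg e))"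
proof -
  have "LMul (LMul (LG e) (LV u)) (ghost_term b u) \<approx> LMul (LG e) (ghost_term b u)"
    using ghost_mult_source[OF e] eu u b
      by (intro mul_cong_left lterms_ghost_term is_path_edges) auto
  also have "\<dots> \<approx> ghost_term (b @ [e]) (rg e)" by (rule ghost_mult_ghost_term[OF e u b eu])
  also have "\<dots> \<approx> LMul (LV (rg e)) (ghost_term (b @ [e]) (rg e))"
    using e graph is_path_snoc[OF b e eu] by (intro lcong.sym[OF vertex_mult_ghost_term]) auto
  finally show ?thesis .
qed

lemma ghost_mult_path_term: "e \<in> Ed \<Longrightarrow> u \<in> V \<Longrightarrow> is_path (e'#a) u \<Longrightarrow>
   LMul (LG e) (path_term (e'#a) u) \<approx> (if e = e' then path_term a u else LZero)"
proof -
  assume e: "e \<in> Ed" and u: "u \<in> V" and p: "is_path (e'#a) u"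
  have w: "wf_term (path_term a u)" "e' \<in> Ed" "is_path a u" "rg e' = path_source sr a u"
    using p u by (auto intro!: lterms_path_term dest: is_path_edges)
  have "LMul (LG e) (path_term (e'#a) u) \<approx> LMul (LMul (LG e) (LE e')) (path_term a u)"
    using e w by (simp, intro lcong.sym[OF lcong.mul_assoc] lterms.intros) auto
  also have "\<dots> \<approx> (if e = e' then path_term a u else LZero)"
  proof (cases "e = e'")
    case True
    have "LMul (LMul (LG e) (LE e')) (path_term a u) \<approx> LMul (LV (rg e)) (path_term a u)"
      using ghost_mult_edge[OF e w(2)] True w by (intro mul_cong_left) auto
    also have "\<dots> \<approx> path_term a u"
      using vertex_mult_path_term[OF u w(3), of "rg e"] True w graph e by auto
    finally show ?thesis using True by simp
  next
    case False
    have "LMul (LMul (LG e) (LE e')) (path_term a u) \<approx> LMul LZero (path_term a u)"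
      using ghost_mult_edge[OF e w(2)] False w by (intro mul_cong_left) auto
    also have "\<dots> \<approx> LZero" using w by (intro LZero_mul)
    finally show ?thesis using False by simp
  qed
  finally show ?thesis .
qed

lemma edge_mult_path_term_mismatch: "e \<in> Ed \<Longrightarrow> u \<in> V \<Longrightarrow> is_path a u \<Longrightarrow> rg e \<noteq> path_source sr a u \<Longrightarrow>
   LMul (LE e) (path_term a u) \<approx> LZero"
proof -
  assume e: "e \<in> Ed" and u: "u \<in> V" and p: "is_path a u" and ne: "rg e \<noteq> path_source sr a u"
  have w: "wf_term (path_term a u)" "rg e \<in> V" using p u e graph
    by (auto intro!: lterms_path_term dest: is_path_edges)
  have "LMul (LE e) (path_term a u) \<approx> LMul (LMul (LE e) (LV (rg e))) (path_term a u)"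
    using e w by (intro mul_cong_left lcong.sym[OF edge_mult_range])
  also have "\<dots> \<approx> LMul (LE e) (LMul (LV (rg e)) (path_term a u))" using e w
    by (intro lcong.mul_assoc lterms.intros)
  also have "\<dots> \<approx> LMul (LE e) LZero" using e vertex_mult_path_term[OF u p w(2)] ne
    by (intro mul_cong_right lterms.intros) auto
  also have "\<dots> \<approx> LZero" using e by (intro mul_LZero lterms.intros)
  finally show ?thesis .
qed

lemma left_mult_monom_term: "wf_term X \<Longrightarrow> valid_monom (c,u,a,b) \<Longrightarrow>
  LMul X (monom_term (c,u,a,b)) \<approx> LSmul c (LMul (LMul X (path_term a u)) (ghost_term b u))"
proof -
  assume X: "wf_term X" and v: "valid_monom (c,u,a,b)"
  have w: "wf_term (path_term a u)" "wf_term (ghost_term b u)" using v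
    by (auto intro!: lterms_path_term lterms_ghost_term dest: is_path_edges)
  have "LMul X (monom_term (c,u,a,b)) \<approx> LSmul c (LMul X (LMul (path_term a u) (ghost_term b u)))"
    using X w by (simp, intro mult_smul_right lterms.intros)
  also have "\<dots> \<approx> LSmul c (LMul (LMul X (path_term a u)) (ghost_term b u))"
    using X w by (intro lcong.smul_cong lcong.sym[OF lcong.mul_assoc])
  finally show ?thesis .
qed

lemma smul_mult_zero: "wf_term G \<Longrightarrow> Y \<approx> LZero \<Longrightarrow> LSmul c (LMul Y G) \<approx> LZero"
proof -
  assume "wf_term G" "Y \<approx> LZero"
  hence "LSmul c (LMul Y G) \<approx> LSmul c (LMul LZero G)" by (intro lcong.smul_cong mul_cong_left)
  also have "\<dots> \<approx> LSmul c LZero" using \<open>wf_term G\<close> by (intro lcong.smul_cong LZero_mul)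
  also have "\<dots> \<approx> LZero" by (rule smul_LZero)
  finally show ?thesis .
qed

lemma monoms_term_single: "valid_monom m \<Longrightarrow> monom_term m \<approx> monoms_term [m]"
  unfolding monoms_term_def by (simp, intro lcong.sym[OF lcong.add_zero] lterms_monom_term)

lemma monoms_term_Nil [simp]: "monoms_term [] = LZero" by (simp add: monoms_term_def)

abbreviation valid_monoms :: "('r,'v,'e) monom list \<Rightarrow> bool" where
  "valid_monoms M \<equiv> \<forall>m\<in>set M. valid_monom m"

fun vertex_mult_monom :: "'v \<Rightarrow> ('r,'v,'e) monom \<Rightarrow> ('r,'v,'e) monom list" where
  "vertex_mult_monom v (c,u,a,b) = (if path_source sr a u = v then [(c,u,a,b)] else [])"
fun edge_mult_monom :: "'e \<Rightarrow> ('r,'v,'e) monom \<Rightarrow> ('r,'v,'e) monom list" where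
  "edge_mult_monom e (c,u,a,b) = (if rg e = path_source sr a u then [(c,u,e#a,b)] else [])"
fun ghost_mult_monom :: "'e \<Rightarrow> ('r,'v,'e) monom \<Rightarrow> ('r,'v,'e) monom list" where
  "ghost_mult_monom e (c,u,[],b) = (if sr e = u then [(c,rg e,[],b@[e])] else [])"
| "ghost_mult_monom e (c,u,e'#a,b) = (if e' = e then [(c,u,a,b)] else [])"

lemma valid_vertex_mult_monom: "valid_monom m \<Longrightarrow> valid_monoms (vertex_mult_monom v m)"
  by (cases m) auto
lemma valid_edge_mult_monom: "e \<in> Ed \<Longrightarrow> valid_monom m \<Longrightarrow> valid_monoms (edge_mult_monom e m)"
  by (cases m) auto
lemma valid_ghost_mult_monom: "e \<in> Ed \<Longrightarrow> valid_monom m \<Longrightarrow> valid_monoms (ghost_mult_monom e m)"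
proof -
  assume e: "e \<in> Ed" and v: "valid_monom m"
  obtain c u a b where m: "m = (c,u,a,b)" by (cases m)
  show ?thesis
  proof (cases a)
    case Nil thus ?thesis using m v e graph is_path_snoc[of b u e] by auto
  next
    case (Cons e' a') thus ?thesis using m v by auto
  qed
qed

lemma vertex_mult_monom_term: "v \<in> V \<Longrightarrow> valid_monom m \<Longrightarrow>
   LMul (LV v) (monom_term m) \<approx> monoms_term (vertex_mult_monom v m)"
proof -
  assume v: "v \<in> V" and vm: "valid_monom m"
  obtain c u a b where m: "m = (c,u,a,b)" by (cases m)
  have u: "u \<in> V" "is_path a u" "wf_term (ghost_term b u)" using vm m
    by (auto intro!: lterms_ghost_term dest: is_path_edges)
  have "LMul (LV v) (monom_term m) \<approx> LSmul c (LMul (LMul (LV v) (path_term a u)) (ghost_term b u))"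
    using m vm v by (simp only:, intro left_mult_monom_term lterms.intros)
  also have "\<dots> \<approx> monoms_term (vertex_mult_monom v m)"
  proof (cases "path_source sr a u = v")
    case True
    have "LSmul c (LMul (LMul (LV v) (path_term a u)) (ghost_term b u))
      \<approx> LSmul c (LMul (path_term a u) (ghost_term b u))"
      using vertex_mult_path_term[OF u(1,2) v] True u by (intro lcong.smul_cong mul_cong_left) auto
    also have "\<dots> \<approx> monoms_term [m]" using m vm monoms_term_single[of m] by simp
    finally show ?thesis using True m by simp
  next
    case False
    have "LSmul c (LMul (LMul (LV v) (path_term a u)) (ghost_term b u)) \<approx> LZero"
      using vertex_mult_path_term[OF u(1,2) v] False u by (intro smul_mult_zero) auto
    thus ?thesis using False m by simp
  qed
  finally show ?thesis .
qed

lemma edge_mult_monom_term: "e \<in> Ed \<Longrightarrow> valid_monom m \<Longrightarrow>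
   LMul (LE e) (monom_term m) \<approx> monoms_term (edge_mult_monom e m)"
proof -
  assume e: "e \<in> Ed" and vm: "valid_monom m"
  obtain c u a b where m: "m = (c,u,a,b)" by (cases m)
  have u: "u \<in> V" "is_path a u" "wf_term (ghost_term b u)" using vm m
    by (auto intro!: lterms_ghost_term dest: is_path_edges)
  have "LMul (LE e) (monom_term m) \<approx> LSmul c (LMul (LMul (LE e) (path_term a u)) (ghost_term b u))"
    using m vm e by (simp only:, intro left_mult_monom_term lterms.intros)
  also have "\<dots> \<approx> monoms_term (edge_mult_monom e m)"
  proof (cases "rg e = path_source sr a u")
    case True
    have "valid_monom (c,u,e#a,b)" using m vm e True by auto
    hence "monom_term (c,u,e#a,b) \<approx> monoms_term [(c,u,e#a,b)]" by (rule monoms_term_single)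
    thus ?thesis using True m by simp
  next
    case False
    have "LSmul c (LMul (LMul (LE e) (path_term a u)) (ghost_term b u)) \<approx> LZero"
      using edge_mult_path_term_mismatch[OF e u(1,2)] False u by (intro smul_mult_zero) auto
    thus ?thesis using False m by simp
  qed
  finally show ?thesis .
qed

lemma ghost_mult_monom_term: "e \<in> Ed \<Longrightarrow> valid_monom m \<Longrightarrow>
   LMul (LG e) (monom_term m) \<approx> monoms_term (ghost_mult_monom e m)"
proof -
  assume e: "e \<in> Ed" and vm: "valid_monom m"
  obtain c u a b where m: "m = (c,u,a,b)" by (cases m)
  have u: "u \<in> V" "is_path a u" "is_path b u" "wf_term (ghost_term b u)" "wf_term (path_term a u)"
    using vm m by (auto intro!: lterms_ghost_term lterms_path_term dest: is_path_edges)
  have "LMul (LG e) (monom_term m) \<approx> LSmul c (LMul (LMul (LG e) (path_term a u)) (ghost_term b u))"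
    using m vm e by (simp only:, intro left_mult_monom_term lterms.intros)
  also have "\<dots> \<approx> monoms_term (ghost_mult_monom e m)"
  proof (cases a)
    case Nil
    show ?thesis
    proof (cases "sr e = u")
      case True
      have re: "rg e \<in> V" using e graph by auto
      have "LSmul c (LMul (LMul (LG e) (path_term a u)) (ghost_term b u))
        \<approx> monom_term (c, rg e, [], b@[e])"
        using ghost_mult_vertex_ghost_term[OF e u(1) u(3) True] Nil by (simp, intro lcong.smul_cong)
      also have "\<dots> \<approx> monoms_term [(c, rg e, [], b@[e])]"
        using re is_path_snoc[OF u(3) e True] by (intro monoms_term_single) simp
      finally show ?thesis using True Nil m by simp
    next
      case False
      have "LSmul c (LMul (LMul (LG e) (path_term a u)) (ghost_term b u)) \<approx> LZero"
        using ghost_mult_vertex[OF e u(1)] False Nil u by (intro smul_mult_zero) auto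
      thus ?thesis using False Nil m by simp
    qed
  next
    case (Cons e' a')
    show ?thesis
    proof (cases "e' = e")
      case True
      have "LSmul c (LMul (LMul (LG e) (path_term a u)) (ghost_term b u))
        \<approx> LSmul c (LMul (path_term a' u) (ghost_term b u))"
        using ghost_mult_path_term[OF e u(1), of e' a'] True Cons u
          by (intro lcong.smul_cong mul_cong_left) auto
      also have "\<dots> \<approx> monoms_term [(c,u,a',b)]"
        using u Cons monoms_term_single[of "(c,u,a',b)"] by auto
      finally show ?thesis using True Cons m by simp
    next
      case False
      have "LSmul c (LMul (LMul (LG e) (path_term a u)) (ghost_term b u)) \<approx> LZero"
        using ghost_mult_path_term[OF e u(1), of e' a'] False Cons u by (intro smul_mult_zero) auto
      thus ?thesis using False Cons m by simp
    qed
  qed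
  finally show ?thesis .
qed

lemma left_mult_monoms_term: "wf_term X \<Longrightarrow> valid_monoms M \<Longrightarrow>
   (\<forall>m\<in>set M. LMul X (monom_term m) \<approx> monoms_term (f m) \<and> valid_monoms (f m)) \<Longrightarrow>
   LMul X (monoms_term M) \<approx> monoms_term (concat (map f M))"
proof -
  assume X: "wf_term X" and vM: "valid_monoms M" and h: "\<forall>m\<in>set M. LMul X (monom_term m)
    \<approx> monoms_term (f m) \<and> valid_monoms (f m)"
  have "LMul X (monoms_term M) \<approx> lsum (map (LMul X) (map monom_term M))"
    unfolding monoms_term_def using X vM by (intro mult_lsum) (auto intro: lterms_monom_term)
  also have "\<dots> = lsum (map (\<lambda>m. LMul X (monom_term m)) M)" by (simp add: comp_def)
  also have "\<dots> \<approx> lsum (map (\<lambda>m. monoms_term (f m)) M)" using h by (intro lsum_map_cong) auto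
  also have "\<dots> = lsum (map lsum (map (\<lambda>m. map monom_term (f m)) M))"
    by (simp add: monoms_term_def comp_def)
  also have "\<dots> \<approx> lsum (concat (map (\<lambda>m. map monom_term (f m)) M))"
    using h by (intro lcong.sym[OF lsum_concat]) (auto intro: lterms_monom_term)
  also have "\<dots> = monoms_term (concat (map f M))" by (simp add: monoms_term_def map_concat comp_def)
  finally show ?thesis .
qed

lemma monoms_term_append: "valid_monoms M \<Longrightarrow> valid_monoms N \<Longrightarrow>
   monoms_term (M @ N) \<approx> LAdd (monoms_term M) (monoms_term N)"
  unfolding monoms_term_def by (simp, intro lsum_append) (auto intro: lterms_monom_term)

lemma monoms_term_perm: "mset M = mset N \<Longrightarrow> valid_monoms M \<Longrightarrow> monoms_term M \<approx> monoms_term N"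
  unfolding monoms_term_def by (intro lsum_perm) (auto intro: lterms_monom_term)

lemma valid_scale_monom: "valid_monom m \<Longrightarrow> valid_monom (scale_monom d m)" by (cases m) auto

lemma smul_monoms_term: "valid_monoms M \<Longrightarrow>
   LSmul d (monoms_term M) \<approx> monoms_term (map (scale_monom d) M)"
proof -
  assume vM: "valid_monoms M"
  have "LSmul d (monoms_term M) \<approx> lsum (map (LSmul d) (map monom_term M))"
    unfolding monoms_term_def using vM by (intro smul_lsum) (auto intro: lterms_monom_term)
  also have "\<dots> \<approx> lsum (map monom_term (map (scale_monom d) M))"
  proof -
    have "\<forall>m\<in>set M. LSmul d (monom_term m) \<approx> monom_term (scale_monom d m)"
    proof
      fix m assume "m \<in> set M"
      hence vm: "valid_monom m" using vM by auto
      obtain c u a b where m0: "m = (c,u,a,b)" by (cases m)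
      note m = m0 vm
      hence "wf_term (LMul (path_term a u) (ghost_term b u))"
        by (auto intro!: lterms.intros lterms_path_term lterms_ghost_term dest: is_path_edges)
      thus "LSmul d (monom_term m) \<approx> monom_term (scale_monom d m)" using m
        by (simp, intro lcong.sym[OF lcong.smul_smul])
    qed
    hence "lsum (map (\<lambda>m. LSmul d (monom_term m)) M)
      \<approx> lsum (map (\<lambda>m. monom_term (scale_monom d m)) M)"
      by (rule lsum_map_cong)
    thus ?thesis by (simp add: comp_def)
  qed
  finally show ?thesis unfolding monoms_term_def .
qed

fun path_mult :: "'e list \<Rightarrow> 'v \<Rightarrow> ('r,'v,'e) monom list \<Rightarrow> ('r,'v,'e) monom list" where
  "path_mult [] u N = concat (map (vertex_mult_monom u) N)"
| "path_mult (e#es) u N = concat (map (edge_mult_monom e) (path_mult es u N))"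

fun ghost_path_mult :: "'e list \<Rightarrow> 'v \<Rightarrow> ('r,'v,'e) monom list \<Rightarrow> ('r,'v,'e) monom list" where
  "ghost_path_mult [] u N = concat (map (vertex_mult_monom u) N)"
| "ghost_path_mult (b#bs) u N = ghost_path_mult bs u (concat (map (ghost_mult_monom b) N))"

lemma vertex_mult_monoms: "v \<in> V \<Longrightarrow> valid_monoms N \<Longrightarrow>
   LMul (LV v) (monoms_term N) \<approx> monoms_term (concat (map (vertex_mult_monom v) N))
     \<and> valid_monoms (concat (map (vertex_mult_monom v) N))"
  by (intro conjI left_mult_monoms_term lterms.intros)
    (auto intro: vertex_mult_monom_term dest: valid_vertex_mult_monom)
lemma edge_mult_monoms: "e \<in> Ed \<Longrightarrow> valid_monoms N \<Longrightarrow>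
   LMul (LE e) (monoms_term N) \<approx> monoms_term (concat (map (edge_mult_monom e) N))
     \<and> valid_monoms (concat (map (edge_mult_monom e) N))"
  by (intro conjI left_mult_monoms_term lterms.intros)
    (auto intro: edge_mult_monom_term dest: valid_edge_mult_monom)
lemma ghost_mult_monoms: "e \<in> Ed \<Longrightarrow> valid_monoms N \<Longrightarrow>
   LMul (LG e) (monoms_term N) \<approx> monoms_term (concat (map (ghost_mult_monom e) N))
     \<and> valid_monoms (concat (map (ghost_mult_monom e) N))"
  by (intro conjI left_mult_monoms_term lterms.intros)
    (auto intro: ghost_mult_monom_term dest: valid_ghost_mult_monom)

lemma path_mult_monoms: "u \<in> V \<Longrightarrow> is_path a u \<Longrightarrow> valid_monoms N \<Longrightarrow>
   LMul (path_term a u) (monoms_term N) \<approx> monoms_term (path_mult a u N)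
     \<and> valid_monoms (path_mult a u N)"
proof (induction a)
  case Nil thus ?case using vertex_mult_monoms by simp
next
  case (Cons e es)
  hence IH: "LMul (path_term es u) (monoms_term N)
    \<approx> monoms_term (path_mult es u N)" "valid_monoms (path_mult es u N)" and e: "e \<in> Ed"
    and w: "wf_term (path_term es u)" by (auto intro!: lterms_path_term dest: is_path_edges)
  have wN: "wf_term (monoms_term N)" using Cons by (intro lterms_monoms_term)
  have "LMul (path_term (e#es) u) (monoms_term N)
    \<approx> LMul (LE e) (LMul (path_term es u) (monoms_term N))"
    using e w wN by (simp, intro lcong.mul_assoc lterms.intros)
  also have "\<dots> \<approx> LMul (LE e) (monoms_term (path_mult es u N))" using IH e
    by (intro mul_cong_right lterms.intros)
  also have "\<dots> \<approx> monoms_term (path_mult (e#es) u N)" using edge_mult_monoms[OF e IH(2)] by simp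
  finally show ?case using edge_mult_monoms[OF e IH(2)] by simp
qed

lemma ghost_path_mult_monoms: "u \<in> V \<Longrightarrow> is_path b u \<Longrightarrow> valid_monoms N \<Longrightarrow>
   LMul (ghost_term b u) (monoms_term N) \<approx> monoms_term (ghost_path_mult b u N)
     \<and> valid_monoms (ghost_path_mult b u N)"
proof (induction b arbitrary: N)
  case Nil thus ?case using vertex_mult_monoms by simp
next
  case (Cons e es)
  have e: "e \<in> Ed" and w: "wf_term (ghost_term es u)" and p: "is_path es u" using Cons
    by (auto intro!: lterms_ghost_term dest: is_path_edges)
  have wN: "wf_term (monoms_term N)" using Cons by (intro lterms_monoms_term)
  note g = ghost_mult_monoms[OF e Cons.prems(3)]
  have IH: "LMul (ghost_term es u) (monoms_term (concat (map (ghost_mult_monom e) N)))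
    \<approx> monoms_term (ghost_path_mult (e#es) u N)"
    "valid_monoms (ghost_path_mult (e#es) u N)"
      using Cons.IH[OF Cons.prems(1) p g[THEN conjunct2]] by auto
  have "LMul (ghost_term (e#es) u) (monoms_term N)
    \<approx> LMul (ghost_term es u) (LMul (LG e) (monoms_term N))"
    using e w wN by (simp, intro lcong.mul_assoc lterms.intros)
  also have "\<dots> \<approx> LMul (ghost_term es u) (monoms_term (concat (map (ghost_mult_monom e) N)))"
    using g w by (intro mul_cong_right) auto
  also have "\<dots> \<approx> monoms_term (ghost_path_mult (e#es) u N)" by (rule IH(1))
  finally show ?case using IH(2) by simp
qed

definition monom_mult :: "('r,'v,'e) monom \<Rightarrow> ('r,'v,'e) monom list \<Rightarrow> ('r,'v,'e) monom list" where
  "monom_mult m N =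
    (case m of (c,u,a,b) \<Rightarrow> map (scale_monom c) (path_mult a u (ghost_path_mult b u N)))"

lemma monom_mult_monoms: "valid_monom m \<Longrightarrow> valid_monoms N \<Longrightarrow>
   LMul (monom_term m) (monoms_term N) \<approx> monoms_term (monom_mult m N)
     \<and> valid_monoms (monom_mult m N)"
proof -
  assume vm: "valid_monom m" and vN: "valid_monoms N"
  obtain c u a b where m: "m = (c,u,a,b)" by (cases m)
  have u: "u \<in> V" "is_path a u" "is_path b u" "wf_term (ghost_term b u)" "wf_term (path_term a u)"
    using vm m by (auto intro!: lterms_ghost_term lterms_path_term dest: is_path_edges)
  have wN: "wf_term (monoms_term N)" using vN by (intro lterms_monoms_term)
  note g = ghost_path_mult_monoms[OF u(1,3) vN]
  note p = path_mult_monoms[OF u(1,2) g[THEN conjunct2]]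
  have "LMul (monom_term m) (monoms_term N)
    \<approx> LSmul c (LMul (LMul (path_term a u) (ghost_term b u)) (monoms_term N))"
    using m u wN by (simp, intro mult_smul_left lterms.intros)
  also have "\<dots> \<approx> LSmul c (LMul (path_term a u) (LMul (ghost_term b u) (monoms_term N)))"
    using u wN by (intro lcong.smul_cong lcong.mul_assoc)
  also have "\<dots> \<approx> LSmul c (LMul (path_term a u) (monoms_term (ghost_path_mult b u N)))"
    using u g by (intro lcong.smul_cong mul_cong_right) auto
  also have "\<dots> \<approx> LSmul c (monoms_term (path_mult a u (ghost_path_mult b u N)))"
    using p by (intro lcong.smul_cong) auto
  also have "\<dots> \<approx> monoms_term (monom_mult m N)" unfolding monom_mult_def m using p
    by (simp, intro smul_monoms_term) auto
  finally show ?thesis using p by (auto simp: monom_mult_def m intro: valid_scale_monom)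
qed

lemma monoms_mult_monoms: "valid_monoms M \<Longrightarrow> valid_monoms N \<Longrightarrow>
   LMul (monoms_term M) (monoms_term N) \<approx> monoms_term (concat (map (\<lambda>m. monom_mult m N) M))
     \<and> valid_monoms (concat (map (\<lambda>m. monom_mult m N) M))"
proof
  assume vM: "valid_monoms M" and vN: "valid_monoms N"
  have wN: "wf_term (monoms_term N)" using vN by (intro lterms_monoms_term)
  have "LMul (monoms_term M) (monoms_term N)
    \<approx> lsum (map (\<lambda>y. LMul y (monoms_term N)) (map monom_term M))"
    unfolding monoms_term_def using vM wN
      by (intro lsum_mult) (auto intro: lterms_monom_term simp: monoms_term_def)
  also have "\<dots> = lsum (map (\<lambda>m. LMul (monom_term m) (monoms_term N)) M)" by (simp add: comp_def)
  also have "\<dots> \<approx> lsum (map (\<lambda>m. monoms_term (monom_mult m N)) M)" using monom_mult_monoms vM vN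
    by (intro lsum_map_cong) auto
  also have "\<dots> = lsum (map lsum (map (\<lambda>m. map monom_term (monom_mult m N)) M))"
    by (simp add: monoms_term_def comp_def)
  also have "\<dots> \<approx> lsum (concat (map (\<lambda>m. map monom_term (monom_mult m N)) M))"
  proof (intro lcong.sym[OF lsum_concat] ballI)
    fix xs x assume a: "xs \<in> set (map (\<lambda>m. map monom_term (monom_mult m N)) M)" "x \<in> set xs"
    then obtain m m' where "m \<in> set M" "m' \<in> set (monom_mult m N)" "x = monom_term m'" by auto
    thus "wf_term x" using monom_mult_monoms vM vN lterms_monom_term by blast
  qed
  also have "\<dots> = monoms_term (concat (map (\<lambda>m. monom_mult m N) M))"
    by (simp add: monoms_term_def map_concat comp_def)
  finally show "LMul (monoms_term M) (monoms_term N)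
    \<approx> monoms_term (concat (map (\<lambda>m. monom_mult m N) M))" .
next
  assume vM: "valid_monoms M" and vN: "valid_monoms N"
  have vP: "\<forall>m\<in>set M. valid_monoms (monom_mult m N)" using monom_mult_monoms vM vN by blast
  show "valid_monoms (concat (map (\<lambda>m. monom_mult m N) M))" using vP by auto
qed

lemma vertex_eq_monom_term: "v \<in> V \<Longrightarrow> LV v \<approx> monom_term (1, v, [], [])"
proof -
  assume v: "v \<in> V"
  have "LV v \<approx> LMul (LV v) (LV v)" using vertex_idem[OF v] by (rule lcong.sym)
  also have "\<dots> \<approx> LSmul 1 (LMul (LV v) (LV v))"
    using v by (intro lcong.sym[OF lcong.one_smul] lterms.intros)
  finally show ?thesis by simp
qed

lemma edge_eq_monom_term: "e \<in> Ed \<Longrightarrow> LE e \<approx> monom_term (1, rg e, [e], [])"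
proof -
  assume e: "e \<in> Ed"
  have re: "rg e \<in> V" using e graph by auto
  have "LE e \<approx> LMul (LE e) (LV (rg e))" using edge_mult_range[OF e] by (rule lcong.sym)
  also have "\<dots> \<approx> LMul (LMul (LE e) (LV (rg e))) (LV (rg e))"
    by (intro mul_cong_left lcong.sym[OF edge_mult_range[OF e]] lterms.intros re)
  also have "\<dots> \<approx> LSmul 1 (LMul (LMul (LE e) (LV (rg e))) (LV (rg e)))"
    by (intro lcong.sym[OF lcong.one_smul] lterms.intros e re)
  finally show ?thesis by simp
qed

lemma ghost_eq_monom_term: "e \<in> Ed \<Longrightarrow> LG e \<approx> monom_term (1, rg e, [], [e])"
proof -
  assume e: "e \<in> Ed"
  have re: "rg e \<in> V" using e graph by auto
  have "LG e \<approx> LMul (LV (rg e)) (LG e)" using range_mult_ghost[OF e] by (rule lcong.sym)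
  also have "\<dots> \<approx> LMul (LV (rg e)) (LMul (LV (rg e)) (LG e))"
    by (intro mul_cong_right lcong.sym[OF range_mult_ghost[OF e]] lterms.intros re)
  also have "\<dots> \<approx> LSmul 1 (LMul (LV (rg e)) (LMul (LV (rg e)) (LG e)))"
    by (intro lcong.sym[OF lcong.one_smul] lterms.intros e re)
  finally show ?thesis by simp
qed

lemma monoms_term_exists: "wf_term t \<Longrightarrow> \<exists>M. valid_monoms M \<and> t \<approx> monoms_term M"
proof (induction rule: lterms.induct)
  case (gen_v v)
  then have "valid_monom (1::'r, v, [], [])" by simp
  then have "monom_term (1::'r, v, [], []) \<approx> monoms_term [(1, v, [], [])]"
    by (rule monoms_term_single)
  then show ?case using vertex_eq_monom_term[OF gen_v] \<open>valid_monom (1::'r, v, [], [])\<close>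
    by (intro exI[of _ "[(1, v, [], [])]"]) (auto intro: lcong.trans)
next
  case (gen_e e)
  then have "valid_monom (1::'r, rg e, [e], [])" using graph by simp
  then have "monom_term (1::'r, rg e, [e], []) \<approx> monoms_term [(1, rg e, [e], [])]"
    by (rule monoms_term_single)
  then show ?case using edge_eq_monom_term[OF gen_e] \<open>valid_monom (1::'r, rg e, [e], [])\<close>
    by (intro exI[of _ "[(1, rg e, [e], [])]"]) (auto intro: lcong.trans)
next
  case (gen_g e)
  then have "valid_monom (1::'r, rg e, [], [e])" using graph by simp
  then have "monom_term (1::'r, rg e, [], [e]) \<approx> monoms_term [(1, rg e, [], [e])]"
    by (rule monoms_term_single)
  then show ?case using ghost_eq_monom_term[OF gen_g] \<open>valid_monom (1::'r, rg e, [], [e])\<close>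
    by (intro exI[of _ "[(1, rg e, [], [e])]"]) (auto intro: lcong.trans)
next
  case zero
  show ?case by (intro exI[of _ "[]"]) (simp add: lcong.refl lterms.intros)
next
  case (add x y)
  then obtain M N where h: "valid_monoms M" "x \<approx> monoms_term M" "valid_monoms N"
    "y \<approx> monoms_term N" by blast
  have "LAdd x y \<approx> LAdd (monoms_term M) (monoms_term N)" using h by (intro lcong.add_cong)
  also have "\<dots> \<approx> monoms_term (M @ N)" using h by (intro lcong.sym[OF monoms_term_append])
  finally show ?case using h by (intro exI[of _ "M @ N"]) auto
next
  case (mul x y)
  then obtain M N where h: "valid_monoms M" "x \<approx> monoms_term M" "valid_monoms N"
    "y \<approx> monoms_term N" by blast
  have "LMul x y \<approx> LMul (monoms_term M) (monoms_term N)" using h by (intro lcong.mul_cong)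
  also have "\<dots> \<approx> monoms_term (concat (map (\<lambda>m. monom_mult m N) M))"
    using monoms_mult_monoms[OF h(1,3)] by simp
  finally show ?case using monoms_mult_monoms[OF h(1,3)] by blast
next
  case (smul x c)
  then obtain M where h: "valid_monoms M" "x \<approx> monoms_term M" by blast
  have "LSmul c x \<approx> LSmul c (monoms_term M)" using h by (intro lcong.smul_cong)
  also have "\<dots> \<approx> monoms_term (map (scale_monom c) M)" using h by (intro smul_monoms_term)
  finally show ?case using h
    by (intro exI[of _ "map (scale_monom c) M"]) (auto intro: valid_scale_monom)
qed

lemma monoms_term_filter_split: "valid_monoms M \<Longrightarrow>
   monoms_term M \<approx> LAdd (monoms_term (filter P M)) (monoms_term (filter (\<lambda>m. \<not> P m) M))"
proof -
  assume vM: "valid_monoms M"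
  have "mset (filter P M @ filter (\<lambda>m. \<not> P m) M) = mset M"
    by (simp add: multiset_partition[symmetric])
  then have "monoms_term M \<approx> monoms_term (filter P M @ filter (\<lambda>m. \<not> P m) M)"
    using vM by (intro monoms_term_perm) auto
  also have "\<dots> \<approx> LAdd (monoms_term (filter P M)) (monoms_term (filter (\<lambda>m. \<not> P m) M))"
    using vM by (intro monoms_term_append) auto
  finally show ?thesis .
qed

lemma monoms_term_zero_by_fibres: "valid_monoms M \<Longrightarrow>
   (\<forall>k. monoms_term (filter (\<lambda>m. f m = k) M) \<approx> LZero) \<Longrightarrow> monoms_term M \<approx> LZero"
proof (induction "length M" arbitrary: M rule: less_induct)
  case less
  show ?case
  proof (cases M)
    case Nil thus ?thesis by (simp add: lcong.refl lterms.intros)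
  next
    case (Cons m0 M0)
    define A where "A = filter (\<lambda>m. f m = f m0) M"
    define B where "B = filter (\<lambda>m. f m \<noteq> f m0) M"
    have vB: "valid_monoms B" using less.prems unfolding B_def by auto
    have lenB: "length B < length M" unfolding B_def Cons by (simp add: le_imp_less_Suc)
    have hB: "\<forall>k. monoms_term (filter (\<lambda>m. f m = k) B) \<approx> LZero"
    proof
      fix k
      show "monoms_term (filter (\<lambda>m. f m = k) B) \<approx> LZero"
      proof (cases "k = f m0")
        case True
        hence "filter (\<lambda>m. f m = k) B = []" unfolding B_def by (auto simp: filter_empty_conv)
        thus ?thesis by (simp add: lcong.refl lterms.intros)
      next
        case False
        hence "filter (\<lambda>m. f m = k) B = filter (\<lambda>m. f m = k) M" unfolding B_def
          by (auto intro: filter_cong)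
        thus ?thesis using less.prems by simp
      qed
    qed
    have "monoms_term M \<approx> LAdd (monoms_term A) (monoms_term B)"
      unfolding A_def B_def using monoms_term_filter_split[OF less.prems(1)] .
    also have "\<dots> \<approx> LAdd LZero LZero"
      using less.prems less.hyps[OF lenB vB hB] unfolding A_def by (intro lcong.add_cong) auto
    also have "\<dots> \<approx> LZero" by (rule LZero_add_LZero)
    finally show ?thesis .
  qed
qed

lemma valid_monom_mult_edge: "valid_monom m \<Longrightarrow> valid_monoms (monom_mult_edge f m)"
proof -
  assume "valid_monom m"
  moreover obtain c u a b where m: "m = (c,u,a,b)" by (cases m)
  ultimately show ?thesis by (cases b) auto
qed

lemma monom_mult_edge_term: "f \<in> Ed \<Longrightarrow> valid_monom m \<Longrightarrow> mghost m \<noteq> [] \<Longrightarrow>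
   LMul (monom_term m) (LE f) \<approx> monoms_term (monom_mult_edge f m)"
proof -
  assume f: "f \<in> Ed" and vm: "valid_monom m" and bn: "mghost m \<noteq> []"
  obtain c u a f' b where m: "m = (c,u,a,f'#b)" using bn by (cases m) (auto simp: neq_Nil_conv)
  have u: "u \<in> V" "is_path a u" "is_path b u" "wf_term (ghost_term b u)" "wf_term (path_term a u)"
    "f' \<in> Ed" "rg f' = path_source sr b u"
    using vm m by (auto intro!: lterms_ghost_term lterms_path_term dest: is_path_edges)
  have "LMul (monom_term m) (LE f)
    \<approx> LSmul c (LMul (LMul (path_term a u) (LMul (ghost_term b u) (LG f'))) (LE f))"
    using m u f by (simp, intro mult_smul_left lterms.intros)
  also have "\<dots> \<approx> LSmul c (LMul (path_term a u) (LMul (LMul (ghost_term b u) (LG f')) (LE f)))"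
    using u f by (intro lcong.smul_cong lcong.mul_assoc lterms.intros)
  also have "\<dots> \<approx> LSmul c (LMul (path_term a u) (LMul (ghost_term b u) (LMul (LG f') (LE f))))"
    using u f by (intro lcong.smul_cong mul_cong_right lcong.mul_assoc lterms.intros)
  also have "\<dots> \<approx> monoms_term (monom_mult_edge f m)"
  proof (cases "f' = f")
    case True
    have "LSmul c (LMul (path_term a u) (LMul (ghost_term b u) (LMul (LG f') (LE f)))) \<approx>
          LSmul c (LMul (path_term a u) (LMul (ghost_term b u) (LV (path_source sr b u))))"
      using ghost_mult_edge[OF u(6) f] True u by (intro lcong.smul_cong mul_cong_right) auto
    also have "\<dots> \<approx> LSmul c (LMul (path_term a u) (ghost_term b u))"
      using ghost_term_mult_source[OF u(1,3)] u by (intro lcong.smul_cong mul_cong_right)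
    also have "\<dots> \<approx> monoms_term [(c,u,a,b)]" using u monoms_term_single[of "(c,u,a,b)"] by simp
    finally show ?thesis using True m by simp
  next
    case False
    have "LSmul c (LMul (path_term a u) (LMul (ghost_term b u) (LMul (LG f') (LE f)))) \<approx>
          LSmul c (LMul (path_term a u) (LMul (ghost_term b u) LZero))"
      using ghost_mult_edge[OF u(6) f] False u by (intro lcong.smul_cong mul_cong_right) auto
    also have "\<dots> \<approx> LSmul c (LMul (path_term a u) LZero)" using u
      by (intro lcong.smul_cong mul_cong_right mul_LZero)
    also have "\<dots> \<approx> LSmul c LZero" using u by (intro lcong.smul_cong mul_LZero)
    also have "\<dots> \<approx> LZero" by (rule smul_LZero)
    finally show ?thesis using False m by simp
  qed
  finally show ?thesis .
qed

lemma right_mult_monoms_term: "wf_term X \<Longrightarrow> valid_monoms M \<Longrightarrow>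
   (\<forall>m\<in>set M. LMul (monom_term m) X \<approx> monoms_term (f m) \<and> valid_monoms (f m)) \<Longrightarrow>
   LMul (monoms_term M) X \<approx> monoms_term (concat (map f M))"
proof -
  assume X: "wf_term X" and vM: "valid_monoms M" and h: "\<forall>m\<in>set M. LMul (monom_term m) X
    \<approx> monoms_term (f m) \<and> valid_monoms (f m)"
  have "LMul (monoms_term M) X \<approx> lsum (map (\<lambda>y. LMul y X) (map monom_term M))"
    unfolding monoms_term_def using X vM by (intro lsum_mult) (auto intro: lterms_monom_term)
  also have "\<dots> = lsum (map (\<lambda>m. LMul (monom_term m) X) M)" by (simp add: comp_def)
  also have "\<dots> \<approx> lsum (map (\<lambda>m. monoms_term (f m)) M)" using h by (intro lsum_map_cong) auto
  also have "\<dots> = lsum (map lsum (map (\<lambda>m. map monom_term (f m)) M))"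
    by (simp add: monoms_term_def comp_def)
  also have "\<dots> \<approx> lsum (concat (map (\<lambda>m. map monom_term (f m)) M))"
  proof (intro lcong.sym[OF lsum_concat] ballI)
    fix xs x assume a: "xs \<in> set (map (\<lambda>m. map monom_term (f m)) M)" "x \<in> set xs"
    then obtain m m' where "m \<in> set M" "m' \<in> set (f m)" "x = monom_term m'" by auto
    thus "wf_term x" using h lterms_monom_term by blast
  qed
  also have "\<dots> = monoms_term (concat (map f M))" by (simp add: monoms_term_def map_concat comp_def)
  finally show ?thesis .
qed

lemma monoms_mult_edge: "f \<in> Ed \<Longrightarrow> valid_monoms M \<Longrightarrow> \<forall>m\<in>set M. mghost m \<noteq> [] \<Longrightarrow>
  LMul (monoms_term M) (LE f) \<approx> monoms_term (concat (map (monom_mult_edge f) M))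
    \<and> valid_monoms (concat (map (monom_mult_edge f) M))"
proof -
  assume f: "f \<in> Ed" and vM: "valid_monoms M" and b: "\<forall>m\<in>set M. mghost m \<noteq> []"
  have h: "\<forall>m\<in>set M. LMul (monom_term m) (LE f) \<approx> monoms_term (monom_mult_edge f m)
    \<and> valid_monoms (monom_mult_edge f m)"
    using f vM b monom_mult_edge_term valid_monom_mult_edge by blast
  have "LMul (monoms_term M) (LE f) \<approx> monoms_term (concat (map (monom_mult_edge f) M))"
    by (rule right_mult_monoms_term[OF lterms.intros(2)[OF f] vM h])
  moreover have "valid_monoms (concat (map (monom_mult_edge f) M))" using h
    by auto
  ultimately show ?thesis by blast
qed

lemma monom_mult_ghost_edge: "valid_monom (c,u,a,b) \<Longrightarrow> f \<in> Ed \<Longrightarrow>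
   LMul (monom_term (c,u,a,b)) (LG f) \<approx> monom_term (c,u,a,f#b)"
proof -
  assume vm: "valid_monom (c,u,a,b)" and f: "f \<in> Ed"
  have u: "wf_term (ghost_term b u)" "wf_term (path_term a u)" using vm
    by (auto intro!: lterms_ghost_term lterms_path_term dest: is_path_edges)
  have "LMul (monom_term (c,u,a,b)) (LG f)
    \<approx> LSmul c (LMul (LMul (path_term a u) (ghost_term b u)) (LG f))"
    using u f by (simp, intro mult_smul_left lterms.intros)
  also have "\<dots> \<approx> LSmul c (LMul (path_term a u) (LMul (ghost_term b u) (LG f)))" using u f
    by (intro lcong.smul_cong lcong.mul_assoc lterms.intros)
  finally show ?thesis by simp
qed

lemma monoms_mult_ghost_edge: "f \<in> Ed \<Longrightarrow> valid_monoms N \<Longrightarrow> valid_monoms (map (cons_ghost f) N) \<Longrightarrow>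
   LMul (monoms_term N) (LG f) \<approx> monoms_term (map (cons_ghost f) N)"
proof -
  assume f: "f \<in> Ed" and vN: "valid_monoms N" and vA: "valid_monoms (map (cons_ghost f) N)"
  have "LMul (monoms_term N) (LG f) \<approx> monoms_term (concat (map (\<lambda>m. [cons_ghost f m]) N))"
  proof (intro right_mult_monoms_term lterms.intros f vN ballI conjI)
    fix m assume mN: "m \<in> set N"
    obtain c u a b where m: "m = (c,u,a,b)" by (cases m)
    have "valid_monom (c,u,a,f#b)" using vA mN m by force
    hence "monom_term (c,u,a,f#b) \<approx> monoms_term [(c,u,a,f#b)]" by (rule monoms_term_single)
    moreover have "LMul (monom_term m) (LG f) \<approx> monom_term (c,u,a,f#b)"
      using monom_mult_ghost_edge vN mN m f by blast
    ultimately show "LMul (monom_term m) (LG f) \<approx> monoms_term [cons_ghost f m]"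
      using m lcong.trans by simp
    show "\<And>x. x \<in> set [cons_ghost f m] \<Longrightarrow> valid_monom x" using vA mN by auto
  qed
  moreover have "concat (map (\<lambda>m. [cons_ghost f m]) N) = map (cons_ghost f) N" by (induction N) auto
  ultimately show ?thesis by simp
qed

lemma ghost_mult_monoms_eq: "\<forall>m\<in>set M. mpath m \<noteq> [] \<Longrightarrow>
   concat (map (ghost_mult_monom e) M) = map drop_path_head (filter (\<lambda>m. hd (mpath m) = e) M)"
proof (induction M)
  case (Cons m M)
  obtain c u a b where m: "m = (c,u,a,b)" by (cases m)
  thus ?case using Cons by (cases a) auto
qed simp

lemma edge_mult_drop_path_head: "valid_monoms M \<Longrightarrow> \<forall>m\<in>set M. mpath m \<noteq> [] \<Longrightarrow>
   concat (map (edge_mult_monom e) (map drop_path_head (filter (\<lambda>m. hd (mpath m) = e) M)))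
     = filter (\<lambda>m. hd (mpath m) = e) M"
proof (induction M)
  case (Cons m M)
  obtain c u a b where m: "m = (c,u,a,b)" by (cases m)
  thus ?case using Cons by (cases a) auto
qed simp

lemma monoms_mult_edge_eq: "\<forall>m\<in>set M. mghost m \<noteq> [] \<Longrightarrow>
   concat (map (monom_mult_edge f) M) = map drop_ghost_head (filter (\<lambda>m. hd (mghost m) = f) M)"
proof (induction M)
  case (Cons m M)
  obtain c u a b where m: "m = (c,u,a,b)" by (cases m)
  thus ?case using Cons by (cases b) auto
qed simp

lemma cons_ghost_drop_ghost_head: "\<forall>m\<in>set M. mghost m \<noteq> [] \<Longrightarrow>
   map (cons_ghost f) (map drop_ghost_head (filter (\<lambda>m. hd (mghost m) = f) M))
     = filter (\<lambda>m. hd (mghost m) = f) M"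
proof (induction M)
  case (Cons m M)
  obtain c u a b where m: "m = (c,u,a,b)" by (cases m)
  thus ?case using Cons by (cases b) auto
qed simp

lemma vertex_mult_monoms_eq:
  "concat (map (vertex_mult_monom u) M) = filter (\<lambda>m. path_source sr (mpath m) (mvertex m) = u) M"
proof (induction M)
  case (Cons m M)
  obtain c u a b where m: "m = (c,u,a,b)" by (cases m)
  thus ?case using Cons by auto
qed simp

lemma ghost_mult_monoms_avoiding: "\<forall>m\<in>set M. path_source sr (mpath m) (mvertex m) = u \<Longrightarrow> sr e = u \<Longrightarrow>
  \<forall>m\<in>set M. mpath m = [] \<longrightarrow> mghost m = [] \<Longrightarrow>
  \<forall>m\<in>set M. mpath m \<noteq> [] \<longrightarrow> hd (mpath m) \<noteq> e \<Longrightarrow>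
  concat (map (ghost_mult_monom e) M)
    = map (\<lambda>m. (mcoef m, rg e, [], [e])) (filter (\<lambda>m. mpath m = []) M)"
proof (induction M)
  case (Cons m M)
  obtain c u a b where m: "m = (c,u,a,b)" by (cases m)
  thus ?case using Cons by (cases a) auto
qed simp

lemma monom_mult_edge_ghost_edge:
  "concat (map (monom_mult_edge e) (map (\<lambda>m. (mcoef m, rg e, [], [e])) L)) =
   map (\<lambda>m. (mcoef m, rg e, [], [])) L"
  by (induction L) auto

lemma monoms_term_at_vertex: "u \<in> V \<Longrightarrow> \<forall>m\<in>set M. m = (mcoef m, u, [], []) \<Longrightarrow>
   monoms_term M \<approx> LSmul (sum_list (map mcoef M)) (LV u)"
proof (induction M)
  case Nil
  have "LSmul 0 (LV u) \<approx> LZero" using Nil by (intro lcong.smul_zero lterms.intros)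
  thus ?case by (simp add: lcong.sym)
next
  case (Cons m M)
  have IH: "lsum (map monom_term M) \<approx> LSmul (sum_list (map mcoef M)) (LV u)" using Cons
    unfolding monoms_term_def by simp
  have "monom_term m = LSmul (mcoef m) (LMul (LV u) (LV u))" using Cons.prems
    by (metis list.set_intros(1) monom_term.simps path_term.simps(1) ghost_term.simps(1))
  also have "\<dots> \<approx> LSmul (mcoef m) (LV u)" using Cons.prems by (intro lcong.smul_cong vertex_idem)
  finally have h: "monom_term m \<approx> LSmul (mcoef m) (LV u)" .
  have "monoms_term (m#M) \<approx> LAdd (LSmul (mcoef m) (LV u)) (LSmul (sum_list (map mcoef M)) (LV u))"
    unfolding monoms_term_def using h IH by (simp, intro lcong.add_cong)
  also have "\<dots> \<approx> LSmul (mcoef m + sum_list (map mcoef M)) (LV u)" using Cons.prems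
    by (intro lcong.sym[OF lcong.add_smul] lterms.intros)
  finally show ?case by simp
qed

lemma monoms_term_at_vertex_zero:
  assumes "u \<in> V" and "\<forall>m\<in>set M. m = (mcoef m, u, [], [])" and "sum_list (map mcoef M) = 0"
  shows "monoms_term M \<approx> LZero"
proof -
  have "monoms_term M \<approx> LSmul 0 (LV u)" using monoms_term_at_vertex[OF assms(1,2)] assms(3) by simp
  also have "\<dots> \<approx> LZero" using assms(1) by (intro lcong.smul_zero lterms.gen_v)
  finally show ?thesis .
qed

lemma lsum_ee_Cons: "lsum_ee (e#es) = LAdd (LMul (LE e) (LG e)) (lsum_ee es)"
  by (simp add: lsum_ee_def)

lemma lterms_lsum_ee: "set es \<subseteq> Ed \<Longrightarrow> wf_term (lsum_ee es)"
  by (induction es) (auto simp: lsum_ee_def intro: lterms.intros)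

lemma lsum_ee_mult_zero: "set es \<subseteq> Ed \<Longrightarrow> wf_term Y \<Longrightarrow>
   (\<forall>e\<in>set es. LMul (LE e) (LMul (LG e) Y) \<approx> LZero) \<Longrightarrow>
   LMul (lsum_ee es) Y \<approx> LZero"
proof (induction es)
  case Nil thus ?case by (simp add: lsum_ee_def LZero_mul)
next
  case (Cons e es)
  have e: "e \<in> Ed" and w: "wf_term (lsum_ee es)" using Cons.prems by (auto intro: lterms_lsum_ee)
  have "LMul (lsum_ee (e#es)) Y \<approx> LAdd (LMul (LMul (LE e) (LG e)) Y) (LMul (lsum_ee es) Y)"
    unfolding lsum_ee_Cons using e w Cons.prems by (intro lcong.distrib_right lterms.intros)
  also have "\<dots> \<approx> LAdd (LMul (LE e) (LMul (LG e) Y)) LZero"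
    using e w Cons by (intro lcong.add_cong lcong.mul_assoc lterms.intros) auto
  also have "\<dots> \<approx> LZero" using Cons.prems
    by (intro lcong.trans[OF lcong.add_zero]) (auto intro: lterms.intros lcong.refl)
  finally show ?case .
qed

lemma monoms_term_zero_at_regular_vertex:
  assumes u: "u \<in> V" "regular_vertex Ed sr u" and vM: "valid_monoms M"
    and source: "\<forall>m\<in>set M. path_source sr (mpath m) (mvertex m) = u"
    and ghost: "\<And>e. e \<in> Ed \<Longrightarrow> sr e = u \<Longrightarrow> monoms_term (concat (map (ghost_mult_monom e) M)) \<approx> LZero"
  shows "monoms_term M \<approx> LZero"
proof -
  obtain es where es: "distinct es" "set es = {e \<in> Ed. sr e = u}"
    using u(2) unfolding regular_vertex_def using finite_distinct_list by blast
  have wM: "wf_term (monoms_term M)" using vM by (rule lterms_monoms_term)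
  have "filter (\<lambda>m. path_source sr (mpath m) (mvertex m) = u) M = M" using source
    by (intro filter_True) blast
  then have "LMul (LV u) (monoms_term M) \<approx> monoms_term M"
    using vertex_mult_monoms[OF u(1) vM] vertex_mult_monoms_eq by simp
  then have "monoms_term M \<approx> LMul (LV u) (monoms_term M)" by (rule lcong.sym)
  also have "\<dots> \<approx> LMul (lsum_ee es) (monoms_term M)" using lcong.ck2[OF u es] wM
    by (intro mul_cong_left)
  also have "\<dots> \<approx> LZero"
  proof (intro lsum_ee_mult_zero wM ballI)
    show "set es \<subseteq> Ed" using es by auto
    fix e assume "e \<in> set es"
    hence e: "e \<in> Ed" "sr e = u" using es by auto
    have "LMul (LE e) (LMul (LG e) (monoms_term M))
      \<approx> LMul (LE e) (monoms_term (concat (map (ghost_mult_monom e) M)))"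
      using ghost_mult_monoms[OF e(1) vM] e by (intro mul_cong_right lterms.intros) auto
    also have "\<dots> \<approx> LMul (LE e) LZero" using ghost[OF e] e by (intro mul_cong_right lterms.intros)
    also have "\<dots> \<approx> LZero" using e by (intro mul_LZero lterms.intros)
    finally show "LMul (LE e) (LMul (LG e) (monoms_term M)) \<approx> LZero" .
  qed
  finally show ?thesis .
qed

end

locale lpa_weighted = lpa_graph V Ed sr rg rty
  for V :: "'v set" and Ed :: "'e set" and sr rg :: "'e \<Rightarrow> 'v" and rty :: "'r::comm_ring_1 itself" +
  fixes w :: "'e \<Rightarrow> 'g::{group_add, linorder}"
  assumes ordG: "ordered_group TYPE('g)"
    and wpos: "\<forall>e\<in>Ed. 0 < w e"
begin

fun path_weight :: "'e list \<Rightarrow> 'g" where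
  "path_weight [] = 0" | "path_weight (e#es) = w e + path_weight es"
fun ghost_weight :: "'e list \<Rightarrow> 'g" where
  "ghost_weight [] = 0" | "ghost_weight (e#es) = ghost_weight es + - w e"

definition mdeg :: "('r,'v,'e) monom \<Rightarrow> 'g" where
  "mdeg m = path_weight (mpath m) + ghost_weight (mghost m)"

lemma mdeg_simp[simp]: "mdeg (c,u,a,b) = path_weight a + ghost_weight b" by (simp add: mdeg_def)

lemma ghost_weight_eq: "ghost_weight b = - path_weight b"
  by (induction b) (auto simp: minus_add)

lemma path_weight_nonneg: "is_path a u \<Longrightarrow> 0 \<le> path_weight a"
proof (induction a)
  case Nil thus ?case by simp
next
  case (Cons e es)
  hence "0 < w e" "0 \<le> path_weight es" using wpos by auto
  hence "w e + 0 \<le> w e + path_weight es" by (intro ordered_group_add_left_mono[OF ordG])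
  thus ?case using \<open>0 < w e\<close> by simp
qed

lemma path_weight_pos: "is_path a u \<Longrightarrow> a \<noteq> [] \<Longrightarrow> 0 < path_weight a"
proof (cases a)
  case (Cons e es)
  assume p: "is_path a u"
  hence "0 < w e" "0 \<le> path_weight es" using wpos Cons path_weight_nonneg[of es u] by auto
  hence "w e + 0 \<le> w e + path_weight es" by (intro ordered_group_add_left_mono[OF ordG])
  thus ?thesis using \<open>0 < w e\<close> Cons by simp
qed simp

lemma monom_deg_path_term: "monom_deg w (path_term a u) (path_weight a)"
  by (induction a) (auto intro: monom_deg.intros)
lemma monom_deg_ghost_term: "monom_deg w (ghost_term b u) (ghost_weight b)"
proof (induction b)
  case Nil thus ?case using monom_deg.intros(1) by fastforce
next
  case (Cons e es) thus ?case using monom_deg.intros(3,4) by fastforce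
qed

lemma lin_deg_monom_term: "mdeg m = g \<Longrightarrow> lin_deg w g (monom_term m)"
proof -
  assume d: "mdeg m = g"
  obtain c u a b where m: "m = (c,u,a,b)" by (cases m)
  have "monom_deg w (LMul (path_term a u) (ghost_term b u)) (path_weight a + ghost_weight b)"
    by (intro monom_deg.intros(4) monom_deg_path_term monom_deg_ghost_term)
  hence "lin_deg w g (LMul (path_term a u) (ghost_term b u))" using d m
    by (auto intro: lin_deg.intros(1))
  thus ?thesis using m by (auto intro: lin_deg.intros(4))
qed

lemma lin_deg_monoms_term: "\<forall>m\<in>set M. mdeg m = g \<Longrightarrow> lin_deg w g (monoms_term M)"
  unfolding monoms_term_def by (induction M) (auto intro: lin_deg.intros lin_deg_monom_term)

lemma mdeg_path_Nil:
  assumes "valid_monom m" and "mpath m = []"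
  shows "mdeg m \<le> 0" and "mdeg m = 0 \<longleftrightarrow> mghost m = []"
proof -
  obtain c u b where m: "m = (c,u,[],b)" and b: "is_path b u" using assms by (cases m) auto
  show "mdeg m \<le> 0"
    using m ordered_group_neg_nonpos[OF ordG path_weight_nonneg[OF b]]
      by (simp add: ghost_weight_eq)
  show "mdeg m = 0 \<longleftrightarrow> mghost m = []"
    using m path_weight_pos[OF b] by (cases "b = []") (auto simp: ghost_weight_eq)
qed

lemma mdeg_ghost_Nil:
  assumes "valid_monom m" and "mghost m = []"
  shows "0 \<le> mdeg m" and "mdeg m = 0 \<longleftrightarrow> mpath m = []"
proof -
  obtain c u a where m: "m = (c,u,a,[])" and a: "is_path a u" using assms by (cases m) auto
  show "0 \<le> mdeg m" using m path_weight_nonneg[OF a] by simp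
  show "mdeg m = 0 \<longleftrightarrow> mpath m = []" using m path_weight_pos[OF a] by (cases "a = []") auto
qed

lemma mdeg_drop_path_head: "mpath m \<noteq> [] \<Longrightarrow> mdeg (drop_path_head m) = - w (hd (mpath m)) + mdeg m"
  by (cases m) (auto simp: neq_Nil_conv add.assoc)

lemma mdeg_drop_ghost_head: "mghost m \<noteq> [] \<Longrightarrow> mdeg (drop_ghost_head m) = mdeg m + w (hd (mghost m))"
  by (cases m) (auto simp: neq_Nil_conv add.assoc)

lemma mlen_drop_path_head: "mpath m \<noteq> [] \<Longrightarrow> mlen (drop_path_head m) < mlen m"
  by (cases m) auto

lemma mlen_drop_ghost_head: "mghost m \<noteq> [] \<Longrightarrow> mlen (drop_ghost_head m) < mlen m"
  by (cases m) auto

end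

locale lpa_graded_hom = lpa_weighted V Ed sr rg rty w
  for V :: "'v set" and Ed :: "'e set" and sr rg :: "'e \<Rightarrow> 'v" and rty :: "'r::comm_ring_1 itself"
    and w :: "'e \<Rightarrow> 'g::{group_add, linorder}" +
  fixes sm :: "'r \<Rightarrow> 'a::ring \<Rightarrow> 'a" and Ag :: "'g \<Rightarrow> 'a set"
    and \<pi> :: "('r,'v,'e) lterm set \<Rightarrow> 'a"
  assumes Agr: "graded_algebra sm Ag"
    and hom_add: "\<forall>x\<in>lterms V Ed. \<forall>y\<in>lterms V Ed.
        \<pi> (lcls V Ed sr rg (LAdd x y)) = \<pi> (lcls V Ed sr rg x) + \<pi> (lcls V Ed sr rg y)"
    and hom_mul: "\<forall>x\<in>lterms V Ed. \<forall>y\<in>lterms V Ed.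
        \<pi> (lcls V Ed sr rg (LMul x y)) = \<pi> (lcls V Ed sr rg x) * \<pi> (lcls V Ed sr rg y)"
    and hom_smul: "\<forall>c. \<forall>x\<in>lterms V Ed.
        \<pi> (lcls V Ed sr rg (LSmul c x)) = sm c (\<pi> (lcls V Ed sr rg x))"
    and hom_graded: "\<forall>g. \<forall>X\<in>LPA_comp V Ed sr rg w g. \<pi> X \<in> Ag g"
    and nonzero: "\<forall>v\<in>V. \<forall>c::'r. c \<noteq> 0 \<longrightarrow> \<pi> (lcls V Ed sr rg (LSmul c (LV v))) \<noteq> 0"
begin

abbreviation \<pi>\<^sub>T :: "('r,'v,'e) lterm \<Rightarrow> 'a" where "\<pi>\<^sub>T x \<equiv> \<pi> (lcls V Ed sr rg x)"

lemma lcls_eq_if_lcong: "x \<approx> y \<Longrightarrow> lcls V Ed sr rg x = lcls V Ed sr rg y"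
  unfolding lcls_def by (auto intro: lcong.trans lcong.sym)

lemma pi_term_cong: "x \<approx> y \<Longrightarrow> \<pi>\<^sub>T x = \<pi>\<^sub>T y" using lcls_eq_if_lcong by simp

lemma pi_term_add: "wf_term x \<Longrightarrow> wf_term y \<Longrightarrow> \<pi>\<^sub>T (LAdd x y) = \<pi>\<^sub>T x + \<pi>\<^sub>T y" using hom_add by blast
lemma pi_term_mult: "wf_term x \<Longrightarrow> wf_term y \<Longrightarrow> \<pi>\<^sub>T (LMul x y) = \<pi>\<^sub>T x * \<pi>\<^sub>T y" using hom_mul by blast
lemma pi_term_smul: "wf_term x \<Longrightarrow> \<pi>\<^sub>T (LSmul c x) = sm c (\<pi>\<^sub>T x)" using hom_smul by blast

lemma pi_term_LZero: "\<pi>\<^sub>T LZero = 0"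
proof -
  have "\<pi>\<^sub>T LZero = \<pi>\<^sub>T (LAdd LZero LZero)" using pi_term_cong[OF LZero_add_LZero] by simp
  also have "\<dots> = \<pi>\<^sub>T LZero + \<pi>\<^sub>T LZero" by (intro pi_term_add lterms.intros)
  finally show ?thesis by simp
qed

lemma pi_term_lcong_LZero: "x \<approx> LZero \<Longrightarrow> \<pi>\<^sub>T x = 0" using pi_term_cong pi_term_LZero by simp

lemma pi_monoms_term: "valid_monoms M \<Longrightarrow>
   \<pi>\<^sub>T (monoms_term M) = sum_list (map (\<lambda>m. \<pi>\<^sub>T (monom_term m)) M)"
proof (induction M)
  case Nil thus ?case by (simp add: pi_term_LZero)
next
  case (Cons m M)
  have "\<pi>\<^sub>T (monoms_term (m#M)) = \<pi>\<^sub>T (monom_term m) + \<pi>\<^sub>T (monoms_term M)"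
    unfolding monoms_term_def using Cons.prems
    by (simp, intro pi_term_add lterms_monom_term lterms_lsum) (auto intro: lterms_monom_term)
  thus ?case using Cons by simp
qed

lemma r_algebra_sm: "r_algebra sm"
  using Agr unfolding graded_algebra_def by blast

lemma pi_term_zero_mult_left: "wf_term X \<Longrightarrow> wf_term Y \<Longrightarrow> \<pi>\<^sub>T Y = 0 \<Longrightarrow> LMul X Y \<approx> Z \<Longrightarrow> \<pi>\<^sub>T Z = 0"
  using pi_term_cong pi_term_mult by (metis mult_zero_right)

lemma pi_term_zero_mult_right: "wf_term X \<Longrightarrow> wf_term Y \<Longrightarrow> \<pi>\<^sub>T X = 0 \<Longrightarrow> LMul X Y \<approx> Z \<Longrightarrow> \<pi>\<^sub>T Z = 0"
  using pi_term_cong pi_term_mult by (metis mult_zero_left)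

lemma pi_monoms_term_homogeneous: "valid_monoms M \<Longrightarrow> \<forall>m\<in>set M. mdeg m = g \<Longrightarrow>
   \<pi>\<^sub>T (monoms_term M) \<in> Ag g"
proof -
  assume "valid_monoms M" "\<forall>m\<in>set M. mdeg m = g"
  then have "lcls V Ed sr rg (monoms_term M) \<in> LPA_comp V Ed sr rg w g"
    unfolding LPA_comp_def using lterms_monoms_term lin_deg_monoms_term by blast
  then show ?thesis using hom_graded by blast
qed

lemma pi_homogeneous_part:
  assumes vM: "valid_monoms M" and ker: "\<pi>\<^sub>T (monoms_term M) = 0"
  shows "\<pi>\<^sub>T (monoms_term (filter (\<lambda>m. mdeg m = g) M)) = 0"
proof -
  define a where "a g = \<pi>\<^sub>T (monoms_term (filter (\<lambda>m. mdeg m = g) M))" for g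
  define D where "D = mdeg ` set M"
  have fD: "finite D" unfolding D_def by simp
  have vMg: "\<And>g. valid_monoms (filter (\<lambda>m. mdeg m = g) M)" using vM by auto
  have aAg: "\<forall>g. a g \<in> Ag g" unfolding a_def using vMg by (auto intro: pi_monoms_term_homogeneous)
  have sub: "{g. a g \<noteq> 0} \<subseteq> D"
  proof
    fix g assume "g \<in> {g. a g \<noteq> 0}"
    hence "filter (\<lambda>m. mdeg m = g) M \<noteq> []" unfolding a_def by (auto simp: pi_term_LZero)
    thus "g \<in> D" unfolding D_def by (auto simp: filter_empty_conv)
  qed
  hence fin: "finite {g. a g \<noteq> 0}" using fD finite_subset by blast
  have "(\<Sum>g\<in>{g. a g \<noteq> 0}. a g) = (\<Sum>g\<in>D. a g)"
    using sub fD by (intro sum.mono_neutral_left) auto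
  also have "\<dots> = (\<Sum>g\<in>D. sum_list (map (\<lambda>m. \<pi>\<^sub>T (monom_term m)) (filter (\<lambda>m. mdeg m = g) M)))"
    unfolding a_def using vMg by (intro sum.cong) (auto simp: pi_monoms_term)
  also have "\<dots> = sum_list (map (\<lambda>m. \<pi>\<^sub>T (monom_term m)) M)"
    using fD by (intro sum_list_filter_partition[symmetric]) (auto simp: D_def)
  also have "\<dots> = 0" using ker pi_monoms_term[OF vM] by simp
  finally have "(\<Sum>g\<in>{g. a g \<noteq> 0}. a g) = 0" .
  then have "a = (\<lambda>_. 0)" using graded_algebra_components_eq_zero[OF Agr fin aAg] by blast
  then show ?thesis unfolding a_def by meson
qed

definition kernel_vanishes_below :: "nat \<Rightarrow> bool" where
  "kernel_vanishes_below n \<longleftrightarrow> (\<forall>M g. valid_monoms M \<longrightarrow> (\<forall>m\<in>set M. mdeg m = g \<and> mlen m < n) \<longrightarrow>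
     \<pi>\<^sub>T (monoms_term M) = 0 \<longrightarrow> monoms_term M \<approx> LZero)"

lemma kernel_vanishes_belowD: "kernel_vanishes_below n \<Longrightarrow> valid_monoms M \<Longrightarrow>
   \<forall>m\<in>set M. mdeg m = g \<and> mlen m < n \<Longrightarrow> \<pi>\<^sub>T (monoms_term M) = 0 \<Longrightarrow> monoms_term M \<approx> LZero"
  unfolding kernel_vanishes_below_def by blast

lemma kernel_vanishes_paths_nonempty:
  assumes IH: "kernel_vanishes_below n" and vM: "valid_monoms M"
    and hom: "\<forall>m\<in>set M. mdeg m = g \<and> mlen m \<le> n" and paths: "\<forall>m\<in>set M. mpath m \<noteq> []"
    and ker: "\<pi>\<^sub>T (monoms_term M) = 0"
  shows "monoms_term M \<approx> LZero"
proof (rule monoms_term_zero_by_fibres[OF vM, of "\<lambda>m. hd (mpath m)"], rule allI)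
  fix e
  define Me where "Me = filter (\<lambda>m. hd (mpath m) = e) M"
  have "monoms_term Me \<approx> LZero"
  proof (cases "Me = []")
    case True thus ?thesis by (simp add: lcong.refl lterms.zero)
  next
    case False
    then obtain m0 where m0: "m0 \<in> set M" "hd (mpath m0) = e" unfolding Me_def
      by (auto simp: filter_empty_conv)
    have e: "e \<in> Ed"
    proof -
      obtain c u a b where "m0 = (c,u,a,b)" by (cases m0)
      thus ?thesis using m0 paths vM by (cases a) auto
    qed
    define T where "T = concat (map (ghost_mult_monom e) M)"
    have T: "T = map drop_path_head Me" unfolding T_def Me_def
      using ghost_mult_monoms_eq[OF paths] .
    have eT: "LMul (LG e) (monoms_term M) \<approx> monoms_term T" and vT: "valid_monoms T"
      using ghost_mult_monoms[OF e vM] unfolding T_def by auto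
    have "\<forall>m'\<in>set T. mdeg m' = - w e + g \<and> mlen m' < n"
    proof
      fix m' assume "m' \<in> set T"
      then obtain m where "m \<in> set M" "hd (mpath m) = e" "m' = drop_path_head m"
        unfolding T Me_def by auto
      then show "mdeg m' = - w e + g \<and> mlen m' < n"
        using hom paths mdeg_drop_path_head[of m] mlen_drop_path_head[of m] by fastforce
    qed
    then have T0: "monoms_term T \<approx> LZero"
      using kernel_vanishes_belowD[OF IH vT]
        pi_term_zero_mult_left[OF lterms.gen_g[OF e] lterms_monoms_term[OF vM] ker eT] by blast
    have "monoms_term Me = monoms_term (concat (map (edge_mult_monom e) T))"
      unfolding T Me_def using edge_mult_drop_path_head[OF vM paths] by simp
    also have "\<dots> \<approx> LMul (LE e) (monoms_term T)" using edge_mult_monoms[OF e vT]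
      by (blast intro: lcong.sym)
    also have "\<dots> \<approx> LMul (LE e) LZero" using T0 e by (intro mul_cong_right lterms.intros)
    also have "\<dots> \<approx> LZero" using e by (intro mul_LZero lterms.intros)
    finally show ?thesis .
  qed
  then show "monoms_term (filter (\<lambda>m. hd (mpath m) = e) M) \<approx> LZero" unfolding Me_def .
qed

lemma kernel_vanishes_ghosts_nonempty:
  assumes IH: "kernel_vanishes_below n" and vM: "valid_monoms M"
    and hom: "\<forall>m\<in>set M. mdeg m = g \<and> mlen m \<le> n" and ghosts: "\<forall>m\<in>set M. mghost m \<noteq> []"
    and ker: "\<pi>\<^sub>T (monoms_term M) = 0"
  shows "monoms_term M \<approx> LZero"
proof (rule monoms_term_zero_by_fibres[OF vM, of "\<lambda>m. hd (mghost m)"], rule allI)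
  fix f
  define Mf where "Mf = filter (\<lambda>m. hd (mghost m) = f) M"
  have "monoms_term Mf \<approx> LZero"
  proof (cases "Mf = []")
    case True thus ?thesis by (simp add: lcong.refl lterms.zero)
  next
    case False
    then obtain m0 where m0: "m0 \<in> set M" "hd (mghost m0) = f" unfolding Mf_def
      by (auto simp: filter_empty_conv)
    have f: "f \<in> Ed"
    proof -
      obtain c u a b where "m0 = (c,u,a,b)" by (cases m0)
      thus ?thesis using m0 ghosts vM by (cases b) auto
    qed
    define R where "R = concat (map (monom_mult_edge f) M)"
    have R: "R = map drop_ghost_head Mf" unfolding R_def Mf_def
      using monoms_mult_edge_eq[OF ghosts] .
    have Rf: "LMul (monoms_term M) (LE f) \<approx> monoms_term R" and vR: "valid_monoms R"
      using monoms_mult_edge[OF f vM ghosts] unfolding R_def by auto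
    have "\<forall>m'\<in>set R. mdeg m' = g + w f \<and> mlen m' < n"
    proof
      fix m' assume "m' \<in> set R"
      then obtain m where "m \<in> set M" "hd (mghost m) = f" "m' = drop_ghost_head m"
        unfolding R Mf_def by auto
      then show "mdeg m' = g + w f \<and> mlen m' < n"
        using hom ghosts mdeg_drop_ghost_head[of m] mlen_drop_ghost_head[of m] by fastforce
    qed
    then have R0: "monoms_term R \<approx> LZero"
      using kernel_vanishes_belowD[OF IH vR]
        pi_term_zero_mult_right[OF lterms_monoms_term[OF vM] lterms.gen_e[OF f] ker Rf] by blast
    have "map (cons_ghost f) R = Mf" unfolding R Mf_def
      using cons_ghost_drop_ghost_head[OF ghosts] .
    then have "LMul (monoms_term R) (LG f) \<approx> monoms_term Mf"
      using monoms_mult_ghost_edge[OF f vR] vM unfolding Mf_def by auto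
    then have "monoms_term Mf \<approx> LMul (monoms_term R) (LG f)" by (rule lcong.sym)
    also have "\<dots> \<approx> LMul LZero (LG f)" using R0 f by (intro mul_cong_left lterms.intros)
    also have "\<dots> \<approx> LZero" using f by (intro LZero_mul lterms.intros)
    finally show ?thesis .
  qed
  then show "monoms_term (filter (\<lambda>m. hd (mghost m) = f) M) \<approx> LZero" unfolding Mf_def .
qed

lemma kernel_vanishes_vertex_monoms:
  assumes "u \<in> V" and "\<forall>m\<in>set M. m = (mcoef m, u, [], [])" and "\<pi>\<^sub>T (monoms_term M) = 0"
  shows "monoms_term M \<approx> LZero"
proof -
  have "\<pi>\<^sub>T (LSmul (sum_list (map mcoef M)) (LV u)) = 0"
    using pi_term_cong[OF monoms_term_at_vertex[OF assms(1,2)]] assms(3) by simp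
  then have "sum_list (map mcoef M) = 0" using nonzero assms(1) by blast
  then show ?thesis using monoms_term_at_vertex_zero[OF assms(1,2)] by blast
qed

text \<open>In degree 0 the monomials of e* X are shorter: e* c p q* = c p' q* if p = e p', and
  e* c u = c e* has length 1.\<close>

lemma ghost_mult_kernel_vanishes:
  assumes IH: "kernel_vanishes_below n" and vM: "valid_monoms M"
    and hom: "\<forall>m\<in>set M. mdeg m = 0 \<and> mlen m \<le> n" and n: "2 \<le> n"
    and vertex: "\<forall>m\<in>set M. mpath m = [] \<longrightarrow> mghost m = []"
    and ker: "\<pi>\<^sub>T (monoms_term M) = 0" and e: "e \<in> Ed"
  shows "monoms_term (concat (map (ghost_mult_monom e) M)) \<approx> LZero"
proof -
  define T where "T = concat (map (ghost_mult_monom e) M)"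
  have eT: "LMul (LG e) (monoms_term M) \<approx> monoms_term T" and vT: "valid_monoms T"
    using ghost_mult_monoms[OF e vM] unfolding T_def by auto
  have "\<forall>m'\<in>set T. mdeg m' = - w e \<and> mlen m' < n"
  proof
    fix m' assume "m' \<in> set T"
    then obtain m where m: "m \<in> set M" "m' \<in> set (ghost_mult_monom e m)" unfolding T_def by auto
    obtain c v a b where mm: "m = (c,v,a,b)" by (cases m)
    show "mdeg m' = - w e \<and> mlen m' < n"
    proof (cases a)
      case Nil
      then have "b = []" using vertex m mm by auto
      then show ?thesis using m mm Nil n by (auto split: if_splits)
    next
      case (Cons e' a')
      then have "m' = drop_path_head m" "e' = e" using m(2) mm by (auto split: if_splits)
      then show ?thesis
        using hom m mm Cons mdeg_drop_path_head[of m] mlen_drop_path_head[of m] by auto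
    qed
  qed
  then show ?thesis
    using kernel_vanishes_belowD[OF IH vT]
      pi_term_zero_mult_left[OF lterms.gen_g[OF e] lterms_monoms_term[OF vM] ker eT]
    unfolding T_def by blast
qed

lemma coeff_sum_zero_if_ghost_edge_zero:
  assumes e: "e \<in> Ed" and zero: "monoms_term (map (\<lambda>m. (mcoef m, rg e, [], [e])) L) \<approx> LZero"
  shows "sum_list (map mcoef L) = 0"
proof -
  define T where "T = map (\<lambda>m. (mcoef m, rg e, []::'e list, [e])) L"
  have re: "rg e \<in> V" using e graph by auto
  have vT: "valid_monoms T" and "\<forall>m\<in>set T. mghost m \<noteq> []" unfolding T_def using e re by auto
  then have "LMul (monoms_term T) (LE e) \<approx> monoms_term (concat (map (monom_mult_edge e) T))"
    using monoms_mult_edge[OF e vT] by blast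
  also have "\<dots> = monoms_term (map (\<lambda>m. (mcoef m, rg e, []::'e list, []::'e list)) L)"
    unfolding T_def monom_mult_edge_ghost_edge ..
  also have "\<dots> \<approx> LSmul (sum_list (map mcoef L)) (LV (rg e))"
    using monoms_term_at_vertex[OF re, of "map (\<lambda>m. (mcoef m, rg e, []::'e list, []::'e list)) L"]
    by (simp add: comp_def)
  finally have "\<pi>\<^sub>T (LSmul (sum_list (map mcoef L)) (LV (rg e))) = 0"
    using pi_term_zero_mult_right[OF lterms_monoms_term[OF vT] lterms.gen_e[OF e]
        pi_term_lcong_LZero[OF zero[folded T_def]]] by blast
  then show ?thesis using nonzero re by blast
qed

text \<open>An infinite emitter u has an edge e that starts no monomial of X; then e* X e is
  c (r e), where c is the sum of the coefficients of the vertex monomials c u of X.\<close>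

lemma kernel_vanishes_at_infinite_emitter:
  assumes IH: "kernel_vanishes_below n" and vM: "valid_monoms M"
    and hom: "\<forall>m\<in>set M. mdeg m = 0 \<and> mlen m \<le> n"
    and vertex: "\<forall>m\<in>set M. mpath m = [] \<longrightarrow> mghost m = []"
    and ker: "\<pi>\<^sub>T (monoms_term M) = 0"
    and u: "u \<in> V" "infinite {e \<in> Ed. sr e = u}"
    and source: "\<forall>m\<in>set M. path_source sr (mpath m) (mvertex m) = u"
    and ghost: "\<And>e. e \<in> Ed \<Longrightarrow> monoms_term (concat (map (ghost_mult_monom e) M)) \<approx> LZero"
  shows "monoms_term M \<approx> LZero"
proof -
  define Vt where "Vt = filter (\<lambda>m. mpath m = []) M"
  define Nt where "Nt = filter (\<lambda>m. \<not> mpath m = []) M"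
  have vVt: "valid_monoms Vt" and vNt: "valid_monoms Nt" using vM unfolding Vt_def Nt_def by auto
  have vertices: "\<forall>m\<in>set Vt. m = (mcoef m, u, [], [])"
  proof
    fix m assume "m \<in> set Vt"
    moreover obtain c v a b where "m = (c,v,a,b)" by (cases m)
    ultimately show "m = (mcoef m, u, [], [])" using source vertex unfolding Vt_def by auto
  qed
  have "infinite ({e \<in> Ed. sr e = u} - (\<lambda>m. hd (mpath m)) ` set Nt)"
    using u(2) by (simp add: Diff_infinite_finite)
  then obtain e where e: "e \<in> Ed" "sr e = u" and fresh: "\<forall>m\<in>set Nt. hd (mpath m) \<noteq> e"
    using infinite_imp_nonempty by blast
  have "concat (map (ghost_mult_monom e) M) = map (\<lambda>m. (mcoef m, rg e, [], [e])) Vt"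
    unfolding Vt_def using ghost_mult_monoms_avoiding[OF source e(2) vertex] fresh
    unfolding Nt_def by auto
  then have "sum_list (map mcoef Vt) = 0"
    using coeff_sum_zero_if_ghost_edge_zero[OF e(1)] ghost[OF e(1)] by simp
  then have V0: "monoms_term Vt \<approx> LZero" using monoms_term_at_vertex_zero[OF u(1) vertices] by blast
  have M: "monoms_term M \<approx> LAdd (monoms_term Vt) (monoms_term Nt)"
    unfolding Vt_def Nt_def using monoms_term_filter_split[OF vM] .
  then have "\<pi>\<^sub>T (monoms_term M) = \<pi>\<^sub>T (monoms_term Vt) + \<pi>\<^sub>T (monoms_term Nt)"
    using pi_term_cong pi_term_add lterms_monoms_term vVt vNt by metis
  then have kerN: "\<pi>\<^sub>T (monoms_term Nt) = 0" using ker pi_term_lcong_LZero[OF V0] by simp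
  have "\<forall>m\<in>set Nt. mdeg m = 0 \<and> mlen m \<le> n" "\<forall>m\<in>set Nt. mpath m \<noteq> []"
    using hom unfolding Nt_def by auto
  then have N0: "monoms_term Nt \<approx> LZero"
    using kernel_vanishes_paths_nonempty[OF IH vNt _ _ kerN] by blast
  have "monoms_term M \<approx> LAdd LZero LZero" using M V0 N0 by (blast intro: lcong.trans lcong.add_cong)
  then show ?thesis using LZero_add_LZero by (rule lcong.trans)
qed

lemma kernel_vanishes_degree_zero:
  assumes IH: "kernel_vanishes_below n" and vM: "valid_monoms M"
    and hom: "\<forall>m\<in>set M. mdeg m = 0 \<and> mlen m \<le> n"
    and ker: "\<pi>\<^sub>T (monoms_term M) = 0" and u: "u \<in> V"
    and source: "\<forall>m\<in>set M. path_source sr (mpath m) (mvertex m) = u"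
  shows "monoms_term M \<approx> LZero"
proof -
  have vertex: "\<forall>m\<in>set M. mpath m = [] \<longrightarrow> mghost m = []"
    using vM hom mdeg_path_Nil(2) by blast
  show ?thesis
  proof (cases "\<forall>m\<in>set M. mpath m = []")
    case True
    have "\<forall>m\<in>set M. m = (mcoef m, u, [], [])"
    proof
      fix m assume "m \<in> set M"
      moreover obtain c v a b where "m = (c,v,a,b)" by (cases m)
      ultimately show "m = (mcoef m, u, [], [])" using True source vertex by auto
    qed
    then show ?thesis using kernel_vanishes_vertex_monoms[OF u _ ker] by blast
  next
    case False
    then obtain m e a where m: "m \<in> set M" "mpath m = e # a" by (auto simp: neq_Nil_conv)
    have "mghost m \<noteq> []" using mdeg_ghost_Nil(2)[of m] vM hom m by auto
    then have n: "2 \<le> n" using hom m by (cases m) (auto simp: neq_Nil_conv)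
    have e: "e \<in> Ed" "sr e = u" using vM source m by (cases m, auto)+
    have ghost: "\<And>e. e \<in> Ed \<Longrightarrow> monoms_term (concat (map (ghost_mult_monom e) M)) \<approx> LZero"
      using ghost_mult_kernel_vanishes[OF IH vM hom n vertex ker] .
    show ?thesis
    proof (cases "regular_vertex Ed sr u")
      case True
      then show ?thesis using monoms_term_zero_at_regular_vertex[OF u True vM source] ghost by blast
    next
      case False
      moreover have "e \<in> {e \<in> Ed. sr e = u}" using e by simp
      ultimately have "infinite {e \<in> Ed. sr e = u}" unfolding regular_vertex_def by blast
      then show ?thesis
        using kernel_vanishes_at_infinite_emitter[OF IH vM hom vertex ker u _ source ghost] by blast
    qed
  qed
qed

lemma kernel_vanishes_at_vertex:
  assumes IH: "kernel_vanishes_below n" and vM: "valid_monoms M"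
    and hom: "\<forall>m\<in>set M. mdeg m = g \<and> mlen m \<le> n"
    and ker: "\<pi>\<^sub>T (monoms_term M) = 0" and u: "u \<in> V"
    and source: "\<forall>m\<in>set M. path_source sr (mpath m) (mvertex m) = u"
  shows "monoms_term M \<approx> LZero"
proof -
  consider (paths) "\<forall>m\<in>set M. mpath m \<noteq> []" | (ghosts) "\<forall>m\<in>set M. mghost m \<noteq> []"
    | (mixed) m1 m2 where "m1 \<in> set M" "mpath m1 = []" "m2 \<in> set M" "mghost m2 = []"
    by blast
  then show ?thesis
  proof cases
    case paths
    then show ?thesis using kernel_vanishes_paths_nonempty[OF IH vM hom _ ker] by blast
  next
    case ghosts
    then show ?thesis using kernel_vanishes_ghosts_nonempty[OF IH vM hom _ ker] by blast
  next
    case mixed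
    have "g \<le> 0" using mdeg_path_Nil(1)[of m1] vM hom mixed by auto
    moreover have "0 \<le> g" using mdeg_ghost_Nil(1)[of m2] vM hom mixed by auto
    ultimately have "\<forall>m\<in>set M. mdeg m = 0 \<and> mlen m \<le> n" using hom by auto
    then show ?thesis using kernel_vanishes_degree_zero[OF IH vM _ ker u source] by blast
  qed
qed

lemma kernel_vanishes_below_Suc:
  assumes IH: "kernel_vanishes_below n"
  shows "kernel_vanishes_below (Suc n)"
  unfolding kernel_vanishes_below_def
proof (intro allI impI)
  fix M g assume vM: "valid_monoms M" and lt: "\<forall>m\<in>set M. mdeg m = g \<and> mlen m < Suc n"
    and ker: "\<pi>\<^sub>T (monoms_term M) = 0"
  show "monoms_term M \<approx> LZero"
  proof (rule monoms_term_zero_by_fibres[OF vM, of "\<lambda>m. path_source sr (mpath m) (mvertex m)"],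
      rule allI)
    fix u
    define Mu where "Mu = filter (\<lambda>m. path_source sr (mpath m) (mvertex m) = u) M"
    have vMu: "valid_monoms Mu" and hom: "\<forall>m\<in>set Mu. mdeg m = g \<and> mlen m \<le> n"
      and source: "\<forall>m\<in>set Mu. path_source sr (mpath m) (mvertex m) = u"
      using vM lt unfolding Mu_def by auto
    have "monoms_term Mu \<approx> LZero"
    proof (cases "Mu = []")
      case True thus ?thesis by (simp add: lcong.refl lterms.zero)
    next
      case False
      then obtain c v a b where "(c,v,a,b) \<in> set Mu" by (cases Mu) auto
      then have "v \<in> V" "is_path a v" "path_source sr a v = u" using vMu source by fastforce+
      then have u: "u \<in> V" using path_source_vertex by blast
      have "LMul (LV u) (monoms_term M) \<approx> monoms_term Mu"
        using vertex_mult_monoms[OF u vM] vertex_mult_monoms_eq unfolding Mu_def by simp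
      then have "\<pi>\<^sub>T (monoms_term Mu) = 0"
        using pi_term_zero_mult_left[OF lterms.gen_v[OF u] lterms_monoms_term[OF vM] ker] by blast
      then show ?thesis using kernel_vanishes_at_vertex[OF IH vMu hom _ u source] by blast
    qed
    then show "monoms_term (filter (\<lambda>m. path_source sr (mpath m) (mvertex m) = u) M) \<approx> LZero"
      unfolding Mu_def .
  qed
qed

lemma kernel_vanishes_below: "kernel_vanishes_below n"
proof (induction n)
  case 0
  show ?case unfolding kernel_vanishes_below_def
  proof (intro allI impI)
    fix M :: "('r,'v,'e) monom list" and g
    assume "valid_monoms M" "\<forall>m\<in>set M. mdeg m = g \<and> mlen m < 0" "\<pi>\<^sub>T (monoms_term M) = 0"
    then have "M = []" by (cases M) auto
    then show "monoms_term M \<approx> LZero" by (simp add: lcong.refl lterms.zero)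
  qed
next
  case (Suc n)
  then show ?case by (rule kernel_vanishes_below_Suc)
qed

theorem pi_inj_on: "inj_on \<pi> (LPA V Ed sr rg)"
proof (rule inj_onI)
  fix X Y assume X: "X \<in> LPA V Ed sr rg" and Y: "Y \<in> LPA V Ed sr rg" and eq: "\<pi> X = \<pi> Y"
  obtain s where s: "wf_term s" "X = lcls V Ed sr rg s" using X unfolding LPA_def by auto
  obtain t where t: "wf_term t" "Y = lcls V Ed sr rg t" using Y unfolding LPA_def by auto
  define d where "d = LAdd s (LSmul (-1) t)"
  have "wf_term d" unfolding d_def using s t by (intro lterms.intros)
  then obtain M where vM: "valid_monoms M" and dM: "d \<approx> monoms_term M"
    using monoms_term_exists by blast
  have "\<pi>\<^sub>T d = 0" unfolding d_def using s t eq
    by (simp add: pi_term_add pi_term_smul lterms.intros r_algebra_minus_one_smul[OF r_algebra_sm])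
  then have ker: "\<pi>\<^sub>T (monoms_term M) = 0" using pi_term_cong[OF dM] by simp
  have bound: "\<forall>m\<in>set M. mlen m < Suc (sum_list (map mlen M))"
    using member_le_sum_list[of _ "map mlen M"] by (simp add: le_imp_less_Suc)
  have "monoms_term (filter (\<lambda>m. mdeg m = g) M) \<approx> LZero" for g
  proof (rule kernel_vanishes_belowD[OF kernel_vanishes_below])
    show "valid_monoms (filter (\<lambda>m. mdeg m = g) M)" using vM by auto
    show "\<forall>m\<in>set (filter (\<lambda>m. mdeg m = g) M). mdeg m = g \<and> mlen m < Suc (sum_list (map mlen M))"
      using bound by auto
  qed (rule pi_homogeneous_part[OF vM ker])
  then have "d \<approx> LZero" using monoms_term_zero_by_fibres[OF vM] dM by (blast intro: lcong.trans)
  then have "s \<approx> t" using lcong_if_diff_LZero s(1) t(1) unfolding d_def by blast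
  then show "X = Y" using s t lcls_eq_if_lcong by simp
qed

end

theorem mainTheorem14:
  fixes V :: "'v set" and Ed :: "'e set" and sr rg :: "'e \<Rightarrow> 'v"
    and w :: "'e \<Rightarrow> 'g::{group_add, linorder}"
    and sm :: "'r::comm_ring_1 \<Rightarrow> 'a::ring \<Rightarrow> 'a"
    and Ag :: "'g \<Rightarrow> 'a set"
    and \<pi> :: "('r,'v,'e) lterm set \<Rightarrow> 'a"
  assumes graph: "\<forall>e\<in>Ed. sr e \<in> V \<and> rg e \<in> V"
    and ordG: "ordered_group TYPE('g)"
    and wpos: "\<forall>e\<in>Ed. 0 < w e"
    and Agr: "graded_algebra sm Ag"
    and hom_add: "\<forall>x\<in>lterms V Ed. \<forall>y\<in>lterms V Ed.
        \<pi> (lcls V Ed sr rg (LAdd x y)) = \<pi> (lcls V Ed sr rg x) + \<pi> (lcls V Ed sr rg y)"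
    and hom_mul: "\<forall>x\<in>lterms V Ed. \<forall>y\<in>lterms V Ed.
        \<pi> (lcls V Ed sr rg (LMul x y)) = \<pi> (lcls V Ed sr rg x) * \<pi> (lcls V Ed sr rg y)"
    and hom_smul: "\<forall>c. \<forall>x\<in>lterms V Ed.
        \<pi> (lcls V Ed sr rg (LSmul c x)) = sm c (\<pi> (lcls V Ed sr rg x))"
    and hom_graded: "\<forall>g. \<forall>X\<in>LPA_comp V Ed sr rg w g. \<pi> X \<in> Ag g"
    and nonzero: "\<forall>v\<in>V. \<forall>c::'r. c \<noteq> 0 \<longrightarrow> \<pi> (lcls V Ed sr rg (LSmul c (LV v))) \<noteq> 0"
  shows "inj_on \<pi> (LPA V Ed sr rg)"
proof -
  interpret lpa_graded_hom V Ed sr rg "TYPE('r)" w sm Ag \<pi>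
    by unfold_locales (fact assms)+
  show ?thesis by (rule pi_inj_on)
qed

end
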